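(* Let $\Omega=(0,L)^2$, $\varepsilon>0$, $T>0$, and let $u(\mathbf{x},t)$ be a sufficiently smooth solution of the Allen–Cahn equation $\partial_tu=\varepsilon^2\Delta u-f(u)$ on $\Omega\times(0,T]$, $f(u)=u^3-u$, with periodic boundary conditions and smooth initial data $u_0$ with $|u_0|\le1$. Let $M$ be a positive integer, $h=L/M$, $\Lambda_h$ the standard five-point central-difference matrix of the Laplacian on the periodic grid $\{\mathbf{x}_h=(ih,jh):1\le i,j\le M\}$, and $\|\cdot\|_\infty$ the grid maximum norm. Let $0=t_0<\dots<t_N=T$, $\tau_k=t_k-t_{k-1}$, $\tau=\max_k\tau_k$, $r_k=\tau_k/\tau_{k-1}$ ($2\le k\le N$), $r_1:=0$. Let $u_h^n$ solve $$D_2u^n=\varepsilon^2\Lambda_hu^n-f(u^n),\quad 1\le n\le N,\qquad u^0=u_0(\mathbf{x}_h),$$ with $f$ componentwise, $D_2u^1=(u^1-u^0)/\tau_1$ and for $n\ge2$ $D_2u^n=\frac{1+2r_n}{\tau_n(1+r_n)}(u^n-u^{n-1})-\frac{r_n^2}{\tau_n(1+r_n)}(u^{n-1}-u^{n-2})$. Let $r_s\in[1,1+\sqrt2)$ satisfy $0<r_k\le r_s$ for $2\le k\le N$, set $\eta=\frac{2r_s^2}{(1+r_s)^2}$, and assume $$\tau_n\le\frac{(1+2r_n)\eta-r_n^2}{\eta^2(1+r_n)}\cdot\frac{1-\eta}{2+4\varepsilon^2h^{-2}}\quad\text{for } n\ge1.$$ Then $$\big\|u(\mathbf{x}_h,t_n)-u_h^n\big\|_\infty\le\frac{C_ut_n}{1-\eta}\exp\Big(\frac{4t_n}{1-\eta}\Big)(\tau^2+h^2)\qquad\text{for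 }1\le n\le N,$$ where $C_u$ is a constant independent of the time-step sizes and time-step ratios. *)

theory Defs
  imports "HOL-Analysis.Analysis"
begin

fun Ck :: "nat \<Rightarrow> ('a::euclidean_space \<Rightarrow> real) \<Rightarrow> bool" where
  "Ck 0 f = continuous_on UNIV f"
| "Ck (Suc k) f = (\<exists>f'. (\<forall>x. (f has_derivative f' x) (at x)) \<and> (\<forall>v. Ck k (\<lambda>x. f' x v)))"

definition smooth_fun :: "('a::euclidean_space \<Rightarrow> real) \<Rightarrow> bool" where
  "smooth_fun f = (\<forall>k. Ck k f)"

definition dt :: "(real \<times> real \<times> real \<Rightarrow> real) \<Rightarrow> real \<Rightarrow> real \<Rightarrow> real \<Rightarrow> real" where
  "dt u x y t = deriv (\<lambda>s. u (x, y, s)) t"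
definition dxx :: "(real \<times> real \<times> real \<Rightarrow> real) \<Rightarrow> real \<Rightarrow> real \<Rightarrow> real \<Rightarrow> real" where
  "dxx u x y t = deriv (\<lambda>s. deriv (\<lambda>r. u (r, y, t)) s) x"
definition dyy :: "(real \<times> real \<times> real \<Rightarrow> real) \<Rightarrow> real \<Rightarrow> real \<Rightarrow> real \<Rightarrow> real" where
  "dyy u x y t = deriv (\<lambda>s. deriv (\<lambda>r. u (x, r, t)) s) y"

definition fAC :: "real \<Rightarrow> real" where
  "fAC v = v ^ 3 - v"

definition ip :: "nat \<Rightarrow> nat \<Rightarrow> nat" where
  "ip M i = (if i = M then 1 else i + 1)"
definition im :: "nat \<Rightarrow> nat \<Rightarrow> nat" where
  "im M i = (if i = 1 then M else i - 1)"

text \<open>Five-point discrete Laplacian on the periodic grid {(ih,jh) : 1 \<le> i,j \<le> M}, h = L/M;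
  grid functions are V :: nat \<Rightarrow> nat \<Rightarrow> real, only values on {1..M}^2 matter.\<close>
definition lap_h :: "real \<Rightarrow> nat \<Rightarrow> (nat \<Rightarrow> nat \<Rightarrow> real) \<Rightarrow> nat \<Rightarrow> nat \<Rightarrow> real" where
  "lap_h h M V i j =
     (V (ip M i) j + V (im M i) j + V i (ip M j) + V i (im M j) - 4 * V i j) / h ^ 2"

definition grid_maxnorm :: "nat \<Rightarrow> (nat \<Rightarrow> nat \<Rightarrow> real) \<Rightarrow> real" where
  "grid_maxnorm M V = Max {\<bar>V i j\<bar> | i j. i \<in> {1..M} \<and> j \<in> {1..M}}"

definition tau :: "(nat \<Rightarrow> real) \<Rightarrow> nat \<Rightarrow> real" where
  "tau t k = t k - t (k - 1)"
definition tau_max :: "(nat \<Rightarrow> real) \<Rightarrow> nat \<Rightarrow> real" where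
  "tau_max t N = Max (tau t ` {1..N})"
definition ratio :: "(nat \<Rightarrow> real) \<Rightarrow> nat \<Rightarrow> real" where
  "ratio t k = (if k \<le> 1 then 0 else tau t k / tau t (k - 1))"

definition D2 :: "(nat \<Rightarrow> real) \<Rightarrow> (nat \<Rightarrow> nat \<Rightarrow> nat \<Rightarrow> real) \<Rightarrow> nat \<Rightarrow> nat \<Rightarrow> nat \<Rightarrow> real" where
  "D2 t U n i j =
     (if n = 1 then (U 1 i j - U 0 i j) / tau t 1
      else (1 + 2 * ratio t n) / (tau t n * (1 + ratio t n)) * (U n i j - U (n - 1) i j)
         - (ratio t n) ^ 2 / (tau t n * (1 + ratio t n)) * (U (n - 1) i j - U (n - 2) i j))"

end

(* The exact solution stays in [-1, 1] by the maximum principle, and under the step-size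
   condition the variable-step BDF2 scheme inherits a discrete version of this bound in the
   sharper form |u^n - eta u^(n-1)| <= 1 - eta, proved by looking at a grid maximum of
   u^n - eta u^(n-1). The error e^n = u(t_n) - u^n satisfies the same scheme linearised around
   the two solutions, with the bounded factor x^2 + x y + y^2 coming from f(x) - f(y) and the
   truncation error as source term. The same maximum-point argument bounds
   ||e^n - eta e^(n-1)|| by the previous errors, and a discrete Gronwall step gives the
   exponential factor. The truncation error is O(tau^2 + h^2) by Taylor expansion. *)

theory Submission
  imports Defs
begin

section \<open>Directional derivatives of smooth functions\<close>

definition dir_deriv :: "'a::euclidean_space \<Rightarrow> ('a \<Rightarrow> real) \<Rightarrow> 'a \<Rightarrow> real" where
  "dir_deriv v f p = deriv (\<lambda>s. f (p + s *\<^sub>R v)) 0"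

abbreviation partial_x :: "(real \<times> real \<times> real \<Rightarrow> real) \<Rightarrow> real \<times> real \<times> real \<Rightarrow> real" where
  "partial_x \<equiv> dir_deriv (1, 0, 0)"

abbreviation partial_y :: "(real \<times> real \<times> real \<Rightarrow> real) \<Rightarrow> real \<times> real \<times> real \<Rightarrow> real" where
  "partial_y \<equiv> dir_deriv (0, 1, 0)"

abbreviation partial_t :: "(real \<times> real \<times> real \<Rightarrow> real) \<Rightarrow> real \<times> real \<times> real \<Rightarrow> real" where
  "partial_t \<equiv> dir_deriv (0, 0, 1)"

lemma Ck_imp_continuous_on: "Ck k f \<Longrightarrow> continuous_on UNIV f"
proof (induction k arbitrary: f)
  case (Suc k)
  then obtain f' where "\<forall>x. (f has_derivative f' x) (at x)" by auto
  then show ?case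
    by (meson continuous_at_imp_continuous_on has_derivative_continuous)
qed simp

lemma Ck_Suc_dir_deriv:
  assumes "Ck (Suc k) f"
  shows "Ck k (dir_deriv v f)"
    and "((\<lambda>s. f (p + s *\<^sub>R v)) has_real_derivative dir_deriv v f (p + s *\<^sub>R v)) (at s)"
proof -
  obtain f' where f': "\<And>x. (f has_derivative f' x) (at x)" and Ck: "\<And>v. Ck k (\<lambda>x. f' x v)"
    using assms by auto
  have line: "((\<lambda>s. f (q + s *\<^sub>R v)) has_real_derivative f' (q + s *\<^sub>R v) v) (at s)" for q s
  proof -
    have "((\<lambda>s. q + s *\<^sub>R v) has_derivative (\<lambda>h. h *\<^sub>R v)) (at s)"
      by (auto intro!: derivative_eq_intros)
    from diff_chain_at[OF this f']
    have "((\<lambda>s. f (q + s *\<^sub>R v)) has_derivative (\<lambda>h. f' (q + s *\<^sub>R v) (h *\<^sub>R v))) (at s)"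
      by (simp add: o_def)
    moreover have "linear (f' (q + s *\<^sub>R v))"
      using f' has_derivative_linear by blast
    ultimately show ?thesis
      by (auto simp: has_real_derivative_iff_has_vector_derivative has_vector_derivative_def
          linear_scale mult.commute)
  qed
  have "dir_deriv v f = (\<lambda>x. f' x v)"
    using DERIV_imp_deriv[OF line[of _ 0]] by (auto simp: dir_deriv_def)
  then show "Ck k (dir_deriv v f)"
    and "((\<lambda>s. f (p + s *\<^sub>R v)) has_real_derivative dir_deriv v f (p + s *\<^sub>R v)) (at s)"
    using Ck line by auto
qed

lemma smooth_fun_dir_deriv: "smooth_fun f \<Longrightarrow> smooth_fun (dir_deriv v f)"
  unfolding smooth_fun_def using Ck_Suc_dir_deriv(1) by blast

lemma smooth_fun_funpow_dir_deriv: "smooth_fun f \<Longrightarrow> smooth_fun ((dir_deriv v ^^ m) f)"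
  by (induction m) (simp_all add: smooth_fun_dir_deriv)

lemma smooth_fun_continuous_on: "smooth_fun f \<Longrightarrow> continuous_on UNIV f"
  unfolding smooth_fun_def using Ck_imp_continuous_on by blast

lemma smooth_fun_has_dir_deriv:
  "smooth_fun f \<Longrightarrow> ((\<lambda>s. f (p + s *\<^sub>R v)) has_real_derivative dir_deriv v f (p + s *\<^sub>R v)) (at s)"
  unfolding smooth_fun_def using Ck_Suc_dir_deriv(2) by blast

lemma smooth_fun_has_partial_x:
  "smooth_fun f \<Longrightarrow> ((\<lambda>r. f (r, y, t)) has_real_derivative partial_x f (x, y, t)) (at x)"
  using smooth_fun_has_dir_deriv[of f "(0, y, t)" "(1, 0, 0)" x] by simp

lemma smooth_fun_has_partial_y:
  "smooth_fun f \<Longrightarrow> ((\<lambda>r. f (x, r, t)) has_real_derivative partial_y f (x, y, t)) (at y)"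
  using smooth_fun_has_dir_deriv[of f "(x, 0, t)" "(0, 1, 0)" y] by simp

lemma smooth_fun_has_partial_t:
  "smooth_fun f \<Longrightarrow> ((\<lambda>r. f (x, y, r)) has_real_derivative partial_t f (x, y, t)) (at t)"
  using smooth_fun_has_dir_deriv[of f "(x, y, 0)" "(0, 0, 1)" t] by simp

lemma smooth_fun_has_funpow_partial_x:
  "smooth_fun f \<Longrightarrow>
    ((\<lambda>r. (partial_x ^^ m) f (r, y, t)) has_real_derivative (partial_x ^^ Suc m) f (x, y, t)) (at x)"
  using smooth_fun_has_partial_x[OF smooth_fun_funpow_dir_deriv] by simp

lemma smooth_fun_has_funpow_partial_y:
  "smooth_fun f \<Longrightarrow>
    ((\<lambda>r. (partial_y ^^ m) f (x, r, t)) has_real_derivative (partial_y ^^ Suc m) f (x, y, t)) (at y)"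
  using smooth_fun_has_partial_y[OF smooth_fun_funpow_dir_deriv] by simp

lemma smooth_fun_has_funpow_partial_t:
  "smooth_fun f \<Longrightarrow>
    ((\<lambda>r. (partial_t ^^ m) f (x, y, r)) has_real_derivative (partial_t ^^ Suc m) f (x, y, t)) (at t)"
  using smooth_fun_has_partial_t[OF smooth_fun_funpow_dir_deriv] by simp

lemma smooth_fun_dt: "smooth_fun u \<Longrightarrow> dt u x y t = partial_t u (x, y, t)"
  unfolding dt_def by (rule DERIV_imp_deriv[OF smooth_fun_has_partial_t])

lemma smooth_fun_dxx:
  assumes u: "smooth_fun u"
  shows "dxx u x y t = partial_x (partial_x u) (x, y, t)"
proof -
  have "(\<lambda>s. deriv (\<lambda>r. u (r, y, t)) s) = (\<lambda>s. partial_x u (s, y, t))"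
    using DERIV_imp_deriv[OF smooth_fun_has_partial_x[OF u]] by blast
  then show ?thesis
    unfolding dxx_def
    by (simp add: DERIV_imp_deriv smooth_fun_has_partial_x smooth_fun_dir_deriv u)
qed

lemma smooth_fun_dyy:
  assumes u: "smooth_fun u"
  shows "dyy u x y t = partial_y (partial_y u) (x, y, t)"
proof -
  have "(\<lambda>s. deriv (\<lambda>r. u (x, r, t)) s) = (\<lambda>s. partial_y u (x, s, t))"
    using DERIV_imp_deriv[OF smooth_fun_has_partial_y[OF u]] by blast
  then show ?thesis
    unfolding dyy_def
    by (simp add: DERIV_imp_deriv smooth_fun_has_partial_y smooth_fun_dir_deriv u)
qed

section \<open>The maximum principle for the Allen--Cahn equation\<close>

lemma periodic_reduce_to_square:
  fixes w :: "real \<times> real \<times> real \<Rightarrow> real"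
  assumes L: "L > 0"
    and per_x: "\<And>x y s. w (x + L, y, s) = w (x, y, s)"
    and per_y: "\<And>x y s. w (x, y + L, s) = w (x, y, s)"
  obtains x' y' where "x' \<in> {0..L}" "y' \<in> {0..L}" "w (x, y, s) = w (x', y', s)"
proof
  interpret px: periodic_fun_simple "\<lambda>r. w (r, y, s)" L by unfold_locales (rule per_x)
  interpret py: periodic_fun_simple "\<lambda>r. w (x - of_int \<lfloor>x / L\<rfloor> * L, r, s)" L
    by unfold_locales (rule per_y)
  show "x - of_int \<lfloor>x / L\<rfloor> * L \<in> {0..L}" "y - of_int \<lfloor>y / L\<rfloor> * L \<in> {0..L}"
    using floor_divide_lower[OF L, of x] floor_divide_upper[OF L, of x]
      floor_divide_lower[OF L, of y] floor_divide_upper[OF L, of y] by (auto simp: distrib_right)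
  show "w (x, y, s) = w (x - of_int \<lfloor>x / L\<rfloor> * L, y - of_int \<lfloor>y / L\<rfloor> * L, s)"
    using px.minus_of_int py.minus_of_int by simp
qed

lemma periodic_attains_spatial_max:
  fixes w :: "real \<times> real \<times> real \<Rightarrow> real"
  assumes L: "L > 0" and cont: "continuous_on UNIV w"
    and per_x: "\<And>x y s. w (x + L, y, s) = w (x, y, s)"
    and per_y: "\<And>x y s. w (x, y + L, s) = w (x, y, s)"
  obtains xs ys where "\<And>x y. w (x, y, s) \<le> w (xs, ys, s)"
proof -
  have "continuous_on ({0..L} \<times> {0..L}) (\<lambda>q. w (fst q, snd q, s))"
    by (intro continuous_on_compose2[OF cont] continuous_intros) auto
  moreover have "compact ({0..L} \<times> {0..L} :: (real \<times> real) set)"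
    by (intro compact_Times compact_Icc)
  ultimately obtain q
    where q: "\<And>q'. q' \<in> {0..L} \<times> {0..L} \<Longrightarrow> w (fst q', snd q', s) \<le> w (fst q, snd q, s)"
    using continuous_attains_sup[of "{0..L} \<times> {0..L}"] L by fastforce
  have "w (x, y, s) \<le> w (fst q, snd q, s)" for x y
    using periodic_reduce_to_square[OF L per_x per_y, of x y s] q
    by (metis fst_conv mem_Times_iff snd_conv)
  then show ?thesis using that by blast
qed

lemma periodic_first_nonneg_time:
  fixes g :: "real \<times> real \<times> real \<Rightarrow> real"
  assumes L: "L > 0" and cont: "continuous_on UNIV g"
    and per_x: "\<And>x y s. g (x + L, y, s) = g (x, y, s)"
    and per_y: "\<And>x y s. g (x, y + L, s) = g (x, y, s)"
    and t: "0 \<le> t" and nonneg: "0 \<le> g (x, y, t)"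
  obtains ts xs ys where "0 \<le> ts" "ts \<le> t" "0 \<le> g (xs, ys, ts)"
    and "\<And>x' y'. g (x', y', ts) \<le> g (xs, ys, ts)"
    and "\<And>s x' y'. 0 \<le> s \<Longrightarrow> s < ts \<Longrightarrow> g (x', y', s) < 0"
proof -
  define A where "A = ({0..L} \<times> {0..L} \<times> {0..t}) \<inter> {p. 0 \<le> g p}"
  have "compact A"
    unfolding A_def
    by (intro compact_Int_closed compact_Times compact_Icc closed_Collect_le continuous_intros cont)
  then have "compact ((\<lambda>p. snd (snd p)) ` A)"
    by (intro compact_continuous_image continuous_intros)
  moreover obtain x' y' where "x' \<in> {0..L}" "y' \<in> {0..L}" "g (x, y, t) = g (x', y', t)"
    using periodic_reduce_to_square[OF L per_x per_y] .
  then have "(x', y', t) \<in> A" using t nonneg by (auto simp: A_def)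
  ultimately obtain ts where "ts \<in> (\<lambda>p. snd (snd p)) ` A"
    and first: "\<And>s. s \<in> (\<lambda>p. snd (snd p)) ` A \<Longrightarrow> ts \<le> s"
    using compact_attains_inf by (metis empty_iff image_eqI snd_conv)
  then obtain x1 y1 where p1: "(x1, y1, ts) \<in> A" by force
  obtain xs ys where max: "\<And>x' y'. g (x', y', ts) \<le> g (xs, ys, ts)"
    using periodic_attains_spatial_max[OF L cont per_x per_y, where s = ts] by blast
  show ?thesis
  proof
    show "0 \<le> ts" "ts \<le> t" using p1 by (auto simp: A_def)
    show "0 \<le> g (xs, ys, ts)" using p1 max[of x1 y1] by (auto simp: A_def)
    show "g (x', y', ts) \<le> g (xs, ys, ts)" for x' y' by (rule max)
    show "g (x', y', s) < 0" if "0 \<le> s" "s < ts" for s x' y'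
    proof (rule ccontr)
      assume "\<not> g (x', y', s) < 0"
      moreover obtain x'' y'' where "x'' \<in> {0..L}" "y'' \<in> {0..L}" "g (x', y', s) = g (x'', y'', s)"
        using periodic_reduce_to_square[OF L per_x per_y] .
      ultimately have "(x'', y'', s) \<in> A" using that \<open>ts \<le> t\<close> by (auto simp: A_def)
      then show False using first[of s] that by force
    qed
  qed
qed

lemma deriv_nonneg_at_first_nonneg:
  fixes \<phi> :: "real \<Rightarrow> real"
  assumes d: "(\<phi> has_real_derivative d) (at ts)" and ts: "0 < ts"
    and before: "\<And>s. 0 \<le> s \<Longrightarrow> s < ts \<Longrightarrow> \<phi> s < 0" and "0 \<le> \<phi> ts"
  shows "0 \<le> d"
proof (rule ccontr)
  assume "\<not> 0 \<le> d"
  then obtain e where e: "0 < e" "\<And>h. 0 < h \<Longrightarrow> h < e \<Longrightarrow> \<phi> ts < \<phi> (ts - h)"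
    using DERIV_neg_dec_left[OF d] by force
  define h where "h = min (e / 2) ts"
  have "0 < h" "h < e" "ts - h \<ge> 0" using e ts by (auto simp: h_def)
  then show False using e(2) before[of "ts - h"] \<open>0 \<le> \<phi> ts\<close> by fastforce
qed

lemma second_deriv_nonpos_at_max:
  fixes \<phi> \<phi>1 \<phi>2 :: "real \<Rightarrow> real"
  assumes d1: "\<And>x. (\<phi> has_real_derivative \<phi>1 x) (at x)"
    and d2: "\<And>x. (\<phi>1 has_real_derivative \<phi>2 x) (at x)"
    and max: "\<And>x. \<phi> x \<le> \<phi> x0"
  shows "\<phi>2 x0 \<le> 0"
proof (rule ccontr)
  assume "\<not> \<phi>2 x0 \<le> 0"
  moreover have "\<phi>1 x0 = 0"
    using DERIV_local_max[OF d1[of x0], of 1] max by auto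
  ultimately obtain e where e: "0 < e" "\<And>h. 0 < h \<Longrightarrow> h < e \<Longrightarrow> 0 < \<phi>1 (x0 + h)"
    using DERIV_pos_inc_right[OF d2[of x0]] by force
  obtain z where z: "x0 < z" "z < x0 + e / 2" "\<phi> (x0 + e / 2) - \<phi> x0 = (e / 2) * \<phi>1 z"
    using MVT2[of x0 "x0 + e / 2" \<phi> \<phi>1] e d1 by auto
  have "0 < \<phi>1 z" using e(2)[of "z - x0"] z by auto
  then have "0 < (e / 2) * \<phi>1 z" using e(1) by simp
  with z(3) have "\<phi> x0 < \<phi> (x0 + e / 2)" by linarith
  with max show False by (meson not_le)
qed

text \<open>If \<open>w\<close> exceeds 1, it exceeds \<open>1 + \<delta> (1 + t)\<close> for some \<open>\<delta> > 0\<close>; at the first time this happens,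
  at a spatial maximum, \<open>w\<^sub>t \<ge> \<delta>\<close>, \<open>\<Delta>w \<le> 0\<close> and \<open>w > 1\<close>, which contradicts \<open>w\<^sub>t = \<epsilon>\<^sup>2\<Delta>w - (w\<^sup>3 - w) < 0\<close>.\<close>
lemma allen_cahn_max_principle:
  fixes w wt wx wxx wy wyy :: "real \<times> real \<times> real \<Rightarrow> real"
  assumes L: "L > 0" and cont: "continuous_on UNIV w"
    and per_x: "\<And>x y s. w (x + L, y, s) = w (x, y, s)"
    and per_y: "\<And>x y s. w (x, y + L, s) = w (x, y, s)"
    and dt: "\<And>x y t. ((\<lambda>s. w (x, y, s)) has_real_derivative wt (x, y, t)) (at t)"
    and dx: "\<And>x y t. ((\<lambda>r. w (r, y, t)) has_real_derivative wx (x, y, t)) (at x)"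
    and dxx: "\<And>x y t. ((\<lambda>r. wx (r, y, t)) has_real_derivative wxx (x, y, t)) (at x)"
    and dy: "\<And>x y t. ((\<lambda>r. w (x, r, t)) has_real_derivative wy (x, y, t)) (at y)"
    and dyy: "\<And>x y t. ((\<lambda>r. wy (x, r, t)) has_real_derivative wyy (x, y, t)) (at y)"
    and pde: "\<And>x y s. 0 < s \<Longrightarrow> s \<le> T \<Longrightarrow>
               wt (x, y, s) = \<epsilon>\<^sup>2 * (wxx (x, y, s) + wyy (x, y, s)) - fAC (w (x, y, s))"
    and init: "\<And>x y. w (x, y, 0) \<le> 1"
    and t: "0 \<le> t" "t \<le> T"
  shows "w (x, y, t) \<le> 1"
proof (rule ccontr)
  assume "\<not> w (x, y, t) \<le> 1"
  define \<delta> where "\<delta> = (w (x, y, t) - 1) / (1 + t)"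
  have \<delta>: "0 < \<delta>" using \<open>\<not> w (x, y, t) \<le> 1\<close> t by (simp add: \<delta>_def)
  define g where "g p = w p - 1 - \<delta> * (1 + snd (snd p))" for p
  have g_cont: "continuous_on UNIV g" unfolding g_def by (intro continuous_intros cont)
  have g_per: "g (x + L, y, s) = g (x, y, s)" "g (x, y + L, s) = g (x, y, s)" for x y s
    using per_x per_y by (simp_all add: g_def)
  have "0 \<le> g (x, y, t)" using t by (simp add: g_def \<delta>_def)
  then obtain ts xs ys where ts_range: "0 \<le> ts" "ts \<le> t" and touch: "0 \<le> g (xs, ys, ts)"
    and max: "\<And>x' y'. g (x', y', ts) \<le> g (xs, ys, ts)"
    and before: "\<And>s x' y'. 0 \<le> s \<Longrightarrow> s < ts \<Longrightarrow> g (x', y', s) < 0"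
    using periodic_first_nonneg_time[OF L g_cont g_per t(1)] by blast
  have wmax: "w (x', y', ts) \<le> w (xs, ys, ts)" for x' y' using max[of x' y'] by (simp add: g_def)
  have "g (xs, ys, 0) < 0" using init[of xs ys] \<delta> by (simp add: g_def)
  with touch ts_range have "0 < ts" by (metis order.not_eq_order_implies_strict not_le)
  have "((\<lambda>s. g (xs, ys, s)) has_real_derivative wt (xs, ys, ts) - \<delta>) (at ts)"
    unfolding g_def using dt by (auto intro!: derivative_eq_intros)
  from deriv_nonneg_at_first_nonneg[OF this \<open>0 < ts\<close> before touch]
  have "\<delta> \<le> wt (xs, ys, ts)" by simp
  moreover have "\<epsilon>\<^sup>2 * (wxx (xs, ys, ts) + wyy (xs, ys, ts)) \<le> 0"
    using second_deriv_nonpos_at_max[OF dx dxx wmax] second_deriv_nonpos_at_max[OF dy dyy wmax]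
    by (simp add: mult_nonneg_nonpos)
  moreover have "0 < fAC (w (xs, ys, ts))"
  proof -
    have "0 < \<delta> * (1 + ts)" using \<delta> ts_range by simp
    moreover have "g (xs, ys, ts) = w (xs, ys, ts) - 1 - \<delta> * (1 + ts)" by (simp add: g_def)
    ultimately have w1: "1 < w (xs, ys, ts)" using touch by linarith
    then have "1 < w (xs, ys, ts) * w (xs, ys, ts)" using less_1_mult by blast
    with w1 show ?thesis by (simp add: fAC_def power3_eq_cube algebra_simps)
  qed
  ultimately show False
    using pde[OF \<open>0 < ts\<close>, of xs ys] ts_range t \<delta> by linarith
qed

lemma allen_cahn_solution_bounded:
  fixes u :: "real \<times> real \<times> real \<Rightarrow> real"
  assumes L: "L > 0" and u: "smooth_fun u"
    and per_x: "\<And>x y s. u (x + L, y, s) = u (x, y, s)"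
    and per_y: "\<And>x y s. u (x, y + L, s) = u (x, y, s)"
    and pde: "\<And>x y s. 0 < s \<Longrightarrow> s \<le> T \<Longrightarrow>
               dt u x y s = \<epsilon>\<^sup>2 * (dxx u x y s + dyy u x y s) - fAC (u (x, y, s))"
    and init: "\<And>x y. \<bar>u (x, y, 0)\<bar> \<le> 1"
    and s: "0 \<le> s" "s \<le> T"
  shows "\<bar>u (x, y, s)\<bar> \<le> 1"
proof -
  note ux = smooth_fun_dir_deriv[OF u]
  note derivs = smooth_fun_has_partial_t[OF u] smooth_fun_has_partial_x[OF u]
    smooth_fun_has_partial_x[OF ux] smooth_fun_has_partial_y[OF u] smooth_fun_has_partial_y[OF ux]
  note pde' = pde[unfolded smooth_fun_dt[OF u] smooth_fun_dxx[OF u] smooth_fun_dyy[OF u]]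
  have cont: "continuous_on UNIV u" by (rule smooth_fun_continuous_on[OF u])
  have "u (x, y, s) \<le> 1"
    by (rule allen_cahn_max_principle[OF L cont per_x per_y derivs pde' _ s])
       (use init in \<open>auto simp: abs_le_iff\<close>)
  moreover have "- u (x, y, s) \<le> 1"
  proof (rule allen_cahn_max_principle[where w = "\<lambda>p. - u p", OF L _ _ _ derivs[THEN DERIV_minus] _ _ s])
    show "continuous_on UNIV (\<lambda>p. - u p)" using cont by (intro continuous_intros)
    show "- partial_t u (x, y, s)
        = \<epsilon>\<^sup>2 * (- partial_x (partial_x u) (x, y, s) + - partial_y (partial_y u) (x, y, s)) - fAC (- u (x, y, s))"
      if "0 < s" "s \<le> T" for x y s
      using pde'[OF that, of x y] by (simp add: fAC_def algebra_simps)
  qed (use per_x per_y init in \<open>auto simp: abs_le_iff\<close>)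
  ultimately show ?thesis by linarith
qed

lemma ip_in_grid: "M \<ge> 1 \<Longrightarrow> i \<in> {1..M} \<Longrightarrow> ip M i \<in> {1..M}"
  by (auto simp: ip_def)

lemma im_in_grid: "M \<ge> 1 \<Longrightarrow> i \<in> {1..M} \<Longrightarrow> im M i \<in> {1..M}"
  by (auto simp: im_def)

lemma grid_maxnorm_eq_Max_image:
  "grid_maxnorm M V = Max ((\<lambda>(i, j). \<bar>V i j\<bar>) ` ({1..M} \<times> {1..M}))"
proof -
  have "{\<bar>V i j\<bar> | i j. i \<in> {1..M} \<and> j \<in> {1..M}} = (\<lambda>(i, j). \<bar>V i j\<bar>) ` ({1..M} \<times> {1..M})"
    by force
  then show ?thesis by (simp add: grid_maxnorm_def)
qed

lemma abs_le_grid_maxnorm: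
  "i \<in> {1..M} \<Longrightarrow> j \<in> {1..M} \<Longrightarrow> \<bar>V i j\<bar> \<le> grid_maxnorm M V"
  unfolding grid_maxnorm_eq_Max_image by (intro Max_ge) auto

lemma grid_maxnorm_nonneg: "M \<ge> 1 \<Longrightarrow> 0 \<le> grid_maxnorm M V"
  using abs_le_grid_maxnorm[of 1 M 1 V] by auto

lemma grid_maxnorm_le:
  assumes "M \<ge> 1" and "\<And>i j. i \<in> {1..M} \<Longrightarrow> j \<in> {1..M} \<Longrightarrow> \<bar>V i j\<bar> \<le> B"
  shows "grid_maxnorm M V \<le> B"
  unfolding grid_maxnorm_eq_Max_image using assms by (subst Max_le_iff) auto

lemma grid_maxnorm_uminus: "grid_maxnorm M (\<lambda>i j. - V i j) = grid_maxnorm M V"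
  by (simp add: grid_maxnorm_def)

lemma grid_maxnorm_add_scaled:
  assumes "M \<ge> 1" and "0 \<le> c"
  shows "grid_maxnorm M (\<lambda>i j. V i j + c * W i j) \<le> grid_maxnorm M V + c * grid_maxnorm M W"
proof (rule grid_maxnorm_le[OF assms(1)])
  fix i j assume ij: "i \<in> {1..M}" "j \<in> {1..M}"
  have "\<bar>V i j + c * W i j\<bar> \<le> \<bar>V i j\<bar> + c * \<bar>W i j\<bar>"
    using assms(2) abs_triangle_ineq[of "V i j" "c * W i j"] by (simp add: abs_mult)
  also have "\<dots> \<le> grid_maxnorm M V + c * grid_maxnorm M W"
    using abs_le_grid_maxnorm[OF ij] assms(2) by (intro add_mono mult_left_mono) auto
  finally show "\<bar>V i j + c * W i j\<bar> \<le> grid_maxnorm M V + c * grid_maxnorm M W" .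
qed

lemma grid_attains_max:
  fixes V :: "nat \<Rightarrow> nat \<Rightarrow> real"
  assumes "M \<ge> 1"
  obtains i0 j0 where "i0 \<in> {1..M}" "j0 \<in> {1..M}"
    and "\<And>i j. i \<in> {1..M} \<Longrightarrow> j \<in> {1..M} \<Longrightarrow> V i j \<le> V i0 j0"
proof -
  let ?S = "(\<lambda>(i, j). V i j) ` ({1..M} \<times> {1..M})"
  have "finite ?S" "?S \<noteq> {}" using assms by auto
  then have "Max ?S \<in> ?S" and max: "\<And>v. v \<in> ?S \<Longrightarrow> v \<le> Max ?S" by auto
  then obtain i0 j0 where "i0 \<in> {1..M}" "j0 \<in> {1..M}" "Max ?S = V i0 j0" by auto
  moreover have "V i j \<le> Max ?S" if "i \<in> {1..M}" "j \<in> {1..M}" for i j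
    using max[OF rev_image_eqI[of "(i, j)"]] that by simp
  ultimately show ?thesis using that by simp
qed

lemma lap_h_uminus: "lap_h h M (\<lambda>i j. - V i j) i j = - lap_h h M V i j"
  unfolding lap_h_def minus_divide_left by (rule arg_cong[where f = "\<lambda>z. z / h\<^sup>2"]) simp

lemma lap_h_diff: "lap_h h M (\<lambda>i j. V i j - W i j) i j = lap_h h M V i j - lap_h h M W i j"
  unfolding lap_h_def by (simp add: diff_divide_distrib[symmetric] algebra_simps)

lemma fAC_uminus: "fAC (- v) = - fAC v"
  by (simp add: fAC_def)

lemma fAC_diff: "fAC x - fAC y = (x\<^sup>2 + x * y + y\<^sup>2 - 1) * (x - y)"
  by (simp add: fAC_def power2_eq_square power3_eq_cube algebra_simps)

lemma fAC_diff_factor_bounds: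
  fixes x y :: real
  assumes "\<bar>x\<bar> \<le> 1" "\<bar>y\<bar> \<le> 1"
  shows "0 \<le> x\<^sup>2 + x * y + y\<^sup>2" "x\<^sup>2 + x * y + y\<^sup>2 \<le> 3"
proof -
  have "x\<^sup>2 + x * y + y\<^sup>2 = (x + y / 2)\<^sup>2 + 3 / 4 * y\<^sup>2" by (simp add: power2_eq_square field_simps)
  then show "0 \<le> x\<^sup>2 + x * y + y\<^sup>2" by simp
  have "x\<^sup>2 \<le> 1" "y\<^sup>2 \<le> 1" "x * y \<le> 1"
    using assms abs_square_le_1 abs_mult[of x y] abs_le_iff mult_le_one[of "\<bar>x\<bar>" "\<bar>y\<bar>"] by auto
  then show "x\<^sup>2 + x * y + y\<^sup>2 \<le> 3" by linarith
qed

lemma periodic_grid_neighbours: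
  fixes g :: "real \<Rightarrow> real"
  assumes per: "\<And>x. g (x + L) = g x" and M: "1 \<le> M" and i: "i \<in> {1..M}"
  shows "g (real (ip M i) * (L / real M)) = g (real i * (L / real M) + L / real M)"
    and "g (real (im M i) * (L / real M)) = g (real i * (L / real M) - L / real M)"
proof -
  have width: "real M * (L / real M) = L" using M by simp
  show "g (real (ip M i) * (L / real M)) = g (real i * (L / real M) + L / real M)"
  proof (cases "i = M")
    case True
    then show ?thesis using per[of "L / real M"] width by (simp add: ip_def add.commute)
  next
    case False
    then show ?thesis by (simp add: ip_def add_divide_distrib algebra_simps)
  qed
  show "g (real (im M i) * (L / real M)) = g (real i * (L / real M) - L / real M)"
  proof (cases "i = 1")
    case True
    then show ?thesis using per[of 0] width by (simp add: im_def)
  next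
    case False
    then have "real (i - 1) = real i - 1" using i by auto
    with False show ?thesis by (simp add: im_def left_diff_distrib diff_divide_distrib)
  qed
qed

lemma lap_h_periodic_sample:
  fixes u :: "real \<times> real \<times> real \<Rightarrow> real"
  assumes per_x: "\<And>x y s. u (x + L, y, s) = u (x, y, s)"
    and per_y: "\<And>x y s. u (x, y + L, s) = u (x, y, s)"
    and M: "1 \<le> M" and ij: "i \<in> {1..M}" "j \<in> {1..M}"
  defines "h \<equiv> L / real M"
  shows "lap_h h M (\<lambda>i j. u (real i * h, real j * h, s)) i j
    = ((u (real i * h + h, real j * h, s) + u (real i * h - h, real j * h, s)
          - 2 * u (real i * h, real j * h, s))
      + (u (real i * h, real j * h + h, s) + u (real i * h, real j * h - h, s)
          - 2 * u (real i * h, real j * h, s))) / h\<^sup>2"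
  unfolding lap_h_def h_def
  using periodic_grid_neighbours[where g = "\<lambda>r. u (r, real j * (L / real M), s)", OF per_x M ij(1)]
    periodic_grid_neighbours[where g = "\<lambda>r. u (real i * (L / real M), r, s)", OF per_y M ij(2)]
  by (simp add: algebra_simps)

definition grid_sample ::
    "real \<Rightarrow> (real \<times> real \<times> real \<Rightarrow> real) \<Rightarrow> (nat \<Rightarrow> real) \<Rightarrow> nat \<Rightarrow> nat \<Rightarrow> nat \<Rightarrow> real"
  where "grid_sample h u t = (\<lambda>n i j. u (real i * h, real j * h, t n))"

section \<open>Time meshes and the BDF2 coefficients\<close>

lemma mesh_mono:
  fixes t :: "nat \<Rightarrow> real"
  assumes inc: "\<forall>k\<in>{1..N}. t (k - 1) < t k" and "i \<le> j" "j \<le> N"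
  shows "t i \<le> t j"
proof (rule lift_Suc_mono_le_ivl[of "{0..<N}"])
  show "t n \<le> t (Suc n)" if "n \<in> {0..<N}" for n
    using bspec[OF inc, of "Suc n"] that by simp
qed (use assms in auto)

lemma tau_pos: "\<forall>k\<in>{1..N}. t (k - 1) < t k \<Longrightarrow> n \<in> {1..N} \<Longrightarrow> 0 < tau t n"
  by (auto simp: tau_def)

lemma tau_le_tau_max: "n \<in> {1..N} \<Longrightarrow> tau t n \<le> tau_max t N"
  unfolding tau_max_def by (intro Max_ge) auto

definition bdf2_a :: "(nat \<Rightarrow> real) \<Rightarrow> nat \<Rightarrow> real" where
  "bdf2_a t n = (1 + 2 * ratio t n) / (tau t n * (1 + ratio t n))"

definition bdf2_b :: "(nat \<Rightarrow> real) \<Rightarrow> nat \<Rightarrow> real" where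
  "bdf2_b t n = (ratio t n)\<^sup>2 / (tau t n * (1 + ratio t n))"

text \<open>For \<open>n = 1\<close> the convention \<open>r\<^sub>1 = 0\<close> turns this into the backward Euler quotient.\<close>
lemma D2_eq_bdf2_coeffs:
  "1 \<le> n \<Longrightarrow>
    D2 t U n i j = bdf2_a t n * (U n i j - U (n - 1) i j) - bdf2_b t n * (U (n - 1) i j - U (n - 2) i j)"
  by (cases "n = 1") (auto simp: D2_def bdf2_a_def bdf2_b_def ratio_def)

text \<open>The step-size condition in coefficient form: \<open>a\<close> and \<open>b\<close> are the coefficients of
  \<open>u\<^sup>n - u\<^sup>n\<^sup>-\<^sup>1\<close> and \<open>u\<^sup>n\<^sup>-\<^sup>1 - u\<^sup>n\<^sup>-\<^sup>2\<close> in the BDF2 quotient, and \<open>\<kappa> = 2 + 4\<epsilon>\<^sup>2/h\<^sup>2\<close> bounds what the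
  cubic term and the discrete Laplacian can contribute at a grid maximum.\<close>
definition stable_bdf2_step :: "real \<Rightarrow> real \<Rightarrow> real \<Rightarrow> real \<Rightarrow> bool" where
  "stable_bdf2_step \<kappa> \<eta> a b \<longleftrightarrow> 1 < a \<and> 0 \<le> b \<and> \<eta> * \<kappa> \<le> (1 - \<eta>) * (a - b / \<eta>)"

lemma stable_bdf2_step_coeffs_nonneg:
  assumes "stable_bdf2_step \<kappa> \<eta> a b" "0 < \<eta>" "0 \<le> \<kappa>"
  shows "0 \<le> (1 - \<eta>) * (a - b / \<eta>) + \<eta>" "0 \<le> b / \<eta>"
proof -
  have "0 \<le> \<eta> * \<kappa>" using assms(2,3) by simp
  then show "0 \<le> (1 - \<eta>) * (a - b / \<eta>) + \<eta>"
    using assms(1,2) unfolding stable_bdf2_step_def by linarith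
  show "0 \<le> b / \<eta>" using assms(1,2) by (simp add: stable_bdf2_step_def)
qed

lemma bdf2_step_restriction_imp_stable:
  fixes \<tau> r \<eta> \<kappa> :: real
  assumes \<tau>: "0 < \<tau>" and r: "0 \<le> r" and \<eta>: "1 / 2 \<le> \<eta>" "\<eta> < 1" and \<kappa>: "2 \<le> \<kappa>"
    and step: "\<tau> \<le> ((1 + 2 * r) * \<eta> - r\<^sup>2) / (\<eta>\<^sup>2 * (1 + r)) * ((1 - \<eta>) / \<kappa>)"
  defines "a \<equiv> (1 + 2 * r) / (\<tau> * (1 + r))" and "b \<equiv> r\<^sup>2 / (\<tau> * (1 + r))"
  shows "stable_bdf2_step \<kappa> \<eta> a b" and "\<kappa> \<le> a" and "1 / (2 * \<tau>) \<le> a - 1"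
proof -
  have "0 < \<eta>" "0 < 1 + r" "0 < \<kappa>" using \<eta> r \<kappa> by auto
  define D where "D = \<tau> * (1 + r)"
  have "0 < D" using \<tau> \<open>0 < 1 + r\<close> by (simp add: D_def)
  have a_eq: "a = ((1 + 2 * r) * \<eta>) / (\<eta> * D)" using \<open>0 < \<eta>\<close> by (simp add: a_def D_def)
  have b_eq: "b / \<eta> = r\<^sup>2 / (\<eta> * D)" by (simp add: b_def D_def divide_divide_eq_left mult.commute)
  have "a - b / \<eta> = ((1 + 2 * r) * \<eta> - r\<^sup>2) / (\<eta> * D)"
    unfolding a_eq b_eq by (simp add: diff_divide_distrib)
  then have "(1 - \<eta>) * (a - b / \<eta>) = (1 - \<eta>) * ((1 + 2 * r) * \<eta> - r\<^sup>2) / (\<eta> * D)"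
    by simp
  moreover have "\<eta> * \<kappa> * (\<eta> * D) \<le> (1 - \<eta>) * ((1 + 2 * r) * \<eta> - r\<^sup>2)"
  proof -
    have "0 < \<eta>\<^sup>2 * (1 + r) * \<kappa>" using \<open>0 < \<eta>\<close> \<open>0 < 1 + r\<close> \<open>0 < \<kappa>\<close> by simp
    moreover have "\<tau> \<le> ((1 + 2 * r) * \<eta> - r\<^sup>2) * (1 - \<eta>) / (\<eta>\<^sup>2 * (1 + r) * \<kappa>)"
      using step by (simp add: field_simps)
    ultimately have "\<tau> * (\<eta>\<^sup>2 * (1 + r) * \<kappa>) \<le> ((1 + 2 * r) * \<eta> - r\<^sup>2) * (1 - \<eta>)"
      by (simp add: pos_le_divide_eq)
    then show ?thesis by (simp add: D_def power2_eq_square algebra_simps)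
  qed
  ultimately have c: "\<eta> * \<kappa> \<le> (1 - \<eta>) * (a - b / \<eta>)"
    using \<open>0 < \<eta>\<close> \<open>0 < D\<close> by (simp add: pos_le_divide_eq)
  have b: "0 \<le> b" using \<tau> r by (simp add: b_def)
  then have "(1 - \<eta>) * (a - b / \<eta>) \<le> (1 - \<eta>) * a"
    using \<eta> \<open>0 < \<eta>\<close> by (simp add: mult_left_mono)
  moreover have "(1 - \<eta>) * \<kappa> \<le> \<eta> * \<kappa>" using \<eta> \<open>0 < \<kappa>\<close> by (simp add: mult_right_mono)
  ultimately show "\<kappa> \<le> a" using c \<eta> by (smt (verit) mult_le_cancel_left_pos)
  then show "stable_bdf2_step \<kappa> \<eta> a b" using b c \<kappa> by (simp add: stable_bdf2_step_def)
  have "1 / \<tau> \<le> a"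
    using \<tau> r by (simp add: a_def divide_simps)
  then show "1 / (2 * \<tau>) \<le> a - 1" using \<open>\<kappa> \<le> a\<close> \<kappa> by simp
qed

lemma bdf2_eta_bounds:
  fixes r :: real
  assumes "1 \<le> r" "r < 1 + sqrt 2"
  shows "1 / 2 \<le> 2 * r\<^sup>2 / (1 + r)\<^sup>2" and "2 * r\<^sup>2 / (1 + r)\<^sup>2 < 1"
proof -
  have p: "0 < (1 + r)\<^sup>2" using assms by simp
  have "(1 + r)\<^sup>2 \<le> (2 * r)\<^sup>2" using assms by (intro power_mono) auto
  then show "1 / 2 \<le> 2 * r\<^sup>2 / (1 + r)\<^sup>2" using p by (simp add: le_divide_eq power_mult_distrib)
  have "(r - 1)\<^sup>2 < (sqrt 2)\<^sup>2" using assms by (intro power_strict_mono) auto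
  then have "2 * r\<^sup>2 < (1 + r)\<^sup>2" by (simp add: power2_eq_square algebra_simps)
  then show "2 * r\<^sup>2 / (1 + r)\<^sup>2 < 1" using p by (simp add: divide_less_eq)
qed

section \<open>The discrete maximum principle\<close>

text \<open>The inequality is the scheme at a grid maximum of \<open>X - \<eta> P\<close> with \<open>x = X\<close>, \<open>p = P\<close>,
  \<open>q = Q\<close> there and \<open>k = \<epsilon>\<^sup>2/h\<^sup>2\<close>; \<open>4k\<eta>(1 - p)\<close> bounds the discrete Laplacian at that point.\<close>
lemma bdf2_max_principle_at_max:
  fixes a b \<eta> k p q x :: real
  assumes \<eta>: "0 < \<eta>" "\<eta> < 1" and stable: "stable_bdf2_step (2 + 4 * k) \<eta> a b" and k: "0 \<le> k"
    and p: "\<bar>p\<bar> \<le> 1" and q: "p - \<eta> * q \<le> 1 - \<eta>"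
    and ineq: "a * (x - p) - b * (p - q) \<le> 4 * k * \<eta> * (1 - p) - (x ^ 3 - x)"
  shows "x - \<eta> * p \<le> 1 - \<eta>"
proof (rule ccontr)
  assume "\<not> x - \<eta> * p \<le> 1 - \<eta>"
  define \<delta> where "\<delta> = x - \<eta> * p - (1 - \<eta>)"
  define c where "c = (1 - \<eta>) * (a - b / \<eta>)"
  define y where "y = \<eta> * (1 - p)"
  have \<delta>: "\<delta> > 0" using \<open>\<not> x - \<eta> * p \<le> 1 - \<eta>\<close> by (simp add: \<delta>_def)
  have a: "1 < a" and b: "0 \<le> b" and c: "\<eta> * (2 + 4 * k) \<le> c"
    using stable by (auto simp: stable_bdf2_step_def c_def)
  have "b * ((p - (1 - \<eta>)) / \<eta>) \<le> b * q"
    using q \<eta> by (intro mult_left_mono[OF _ b]) (simp add: field_simps)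
  moreover have "a * (x - p) - b * p + b * ((p - (1 - \<eta>)) / \<eta>) = a * \<delta> + c * (1 - p)"
    using \<eta> unfolding c_def \<delta>_def by (simp add: field_simps)
  ultimately have h2: "a * \<delta> + c * (1 - p) \<le> 4 * k * \<eta> * (1 - p) - (x ^ 3 - x)"
    using ineq by (simp add: algebra_simps)
  have h3: "2 * \<eta> * (1 - p) \<le> (c - 4 * k * \<eta>) * (1 - p)"
    using c p by (intro mult_right_mono) (auto simp: algebra_simps)
  have y: "0 \<le> y" "y \<le> 2 * \<eta>"
    using mult_left_mono[of "1 - p" 2 \<eta>] \<eta> p by (auto simp: y_def mult.commute)
  then have y2: "y \<le> 2" using \<eta> by linarith
  have x: "x = (1 - y) + \<delta>" by (simp add: \<delta>_def y_def algebra_simps)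
  have cubic_at_1_minus_y: "(1 - y) - (1 - y) ^ 3 \<le> 2 * y"
  proof -
    have "(1 - y) - (1 - y) ^ 3 = y * ((1 - y) * (2 - y))" by (simp add: power3_eq_cube algebra_simps)
    moreover have "(1 - y) * (2 - y) \<le> 2"
      using mult_right_mono[OF y2 y(1)] y(1) by (simp add: algebra_simps)
    ultimately show ?thesis using y(1) by (metis mult_left_mono mult.commute mult_1)
  qed
  have cubic_increment: "(x - x ^ 3) - ((1 - y) - (1 - y) ^ 3) \<le> \<delta>"
  proof -
    define S where "S = x * x + x * (1 - y) + (1 - y) * (1 - y)"
    have "(x - x ^ 3) - ((1 - y) - (1 - y) ^ 3) = \<delta> * (1 - S)"
      unfolding x S_def by (simp add: power3_eq_cube algebra_simps)
    moreover have "S = (x + (1 - y) / 2)\<^sup>2 + 3 / 4 * (1 - y)\<^sup>2"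
      unfolding S_def by (simp add: power2_eq_square field_simps)
    then have "0 \<le> \<delta> * S" using \<delta> by simp
    ultimately show ?thesis by (simp add: right_diff_distrib)
  qed
  have "a * \<delta> \<le> \<delta>"
    using h2 h3 cubic_at_1_minus_y cubic_increment by (simp add: algebra_simps y_def)
  then show False using a \<delta> by (simp add: mult_le_cancel_right1)
qed

lemma bdf2_step_max_principle_upper:
  fixes P Q X :: "nat \<Rightarrow> nat \<Rightarrow> real" and M :: nat
  assumes M: "M \<ge> 1" and h: "0 < h" and \<eta>: "0 < \<eta>" "\<eta> < 1"
    and stable: "stable_bdf2_step (2 + 4 * \<epsilon>\<^sup>2 / h\<^sup>2) \<eta> a b"
    and P: "\<And>i j. i \<in> {1..M} \<Longrightarrow> j \<in> {1..M} \<Longrightarrow> \<bar>P i j\<bar> \<le> 1"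
    and PQ: "\<And>i j. i \<in> {1..M} \<Longrightarrow> j \<in> {1..M} \<Longrightarrow> P i j - \<eta> * Q i j \<le> 1 - \<eta>"
    and scheme: "\<And>i j. i \<in> {1..M} \<Longrightarrow> j \<in> {1..M} \<Longrightarrow>
               a * (X i j - P i j) - b * (P i j - Q i j) = \<epsilon>\<^sup>2 * lap_h h M X i j - fAC (X i j)"
    and ij: "i \<in> {1..M}" "j \<in> {1..M}"
  shows "X i j - \<eta> * P i j \<le> 1 - \<eta>"
proof -
  obtain i0 j0 where ij0: "i0 \<in> {1..M}" "j0 \<in> {1..M}"
    and max: "\<And>i j. i \<in> {1..M} \<Longrightarrow> j \<in> {1..M} \<Longrightarrow> X i j - \<eta> * P i j \<le> X i0 j0 - \<eta> * P i0 j0"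
    using grid_attains_max[OF M, of "\<lambda>i j. X i j - \<eta> * P i j"] by blast
  define p where "p = P i0 j0"
  have nb: "X i j \<le> X i0 j0 - \<eta> * p + \<eta>" if "i \<in> {1..M}" "j \<in> {1..M}" for i j
    using max[OF that] P[OF that] \<eta> unfolding p_def by (smt (verit) abs_le_iff mult_left_le)
  have "X (ip M i0) j0 + X (im M i0) j0 + X i0 (ip M j0) + X i0 (im M j0) \<le> 4 * (X i0 j0 - \<eta> * p + \<eta>)"
    using nb[OF ip_in_grid[OF M ij0(1)] ij0(2)] nb[OF im_in_grid[OF M ij0(1)] ij0(2)]
      nb[OF ij0(1) ip_in_grid[OF M ij0(2)]] nb[OF ij0(1) im_in_grid[OF M ij0(2)]] by (smt (verit))
  then have "lap_h h M X i0 j0 \<le> 4 * \<eta> * (1 - p) / h\<^sup>2"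
    unfolding lap_h_def by (intro divide_right_mono) (auto simp: algebra_simps)
  then have "\<epsilon>\<^sup>2 * lap_h h M X i0 j0 \<le> \<epsilon>\<^sup>2 * (4 * \<eta> * (1 - p) / h\<^sup>2)"
    by (intro mult_left_mono) auto
  also have "\<dots> = 4 * (\<epsilon>\<^sup>2 / h\<^sup>2) * \<eta> * (1 - p)" by simp
  finally have "a * (X i0 j0 - p) - b * (p - Q i0 j0) \<le> 4 * (\<epsilon>\<^sup>2 / h\<^sup>2) * \<eta> * (1 - p) - (X i0 j0 ^ 3 - X i0 j0)"
    using scheme[OF ij0] unfolding p_def fAC_def by linarith
  then have "X i0 j0 - \<eta> * p \<le> 1 - \<eta>"
    using bdf2_max_principle_at_max[OF \<eta>, of "\<epsilon>\<^sup>2 / h\<^sup>2" a b p "Q i0 j0"] stable P[OF ij0] PQ[OF ij0]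
    by (simp add: p_def)
  then show ?thesis using max[OF ij] unfolding p_def by linarith
qed

lemma bdf2_step_max_principle:
  fixes P Q X :: "nat \<Rightarrow> nat \<Rightarrow> real" and M :: nat
  assumes M: "M \<ge> 1" and h: "0 < h" and \<eta>: "0 < \<eta>" "\<eta> < 1"
    and stable: "stable_bdf2_step (2 + 4 * \<epsilon>\<^sup>2 / h\<^sup>2) \<eta> a b"
    and P: "\<And>i j. i \<in> {1..M} \<Longrightarrow> j \<in> {1..M} \<Longrightarrow> \<bar>P i j\<bar> \<le> 1"
    and PQ: "\<And>i j. i \<in> {1..M} \<Longrightarrow> j \<in> {1..M} \<Longrightarrow> \<bar>P i j - \<eta> * Q i j\<bar> \<le> 1 - \<eta>"
    and scheme: "\<And>i j. i \<in> {1..M} \<Longrightarrow> j \<in> {1..M} \<Longrightarrow>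
               a * (X i j - P i j) - b * (P i j - Q i j) = \<epsilon>\<^sup>2 * lap_h h M X i j - fAC (X i j)"
    and ij: "i \<in> {1..M}" "j \<in> {1..M}"
  shows "\<bar>X i j - \<eta> * P i j\<bar> \<le> 1 - \<eta>" and "\<bar>X i j\<bar> \<le> 1"
proof -
  have "X i j - \<eta> * P i j \<le> 1 - \<eta>"
    by (rule bdf2_step_max_principle_upper[OF M h \<eta> stable P _ scheme ij]) (use PQ in \<open>auto simp: abs_le_iff\<close>)
  moreover have "(- X i j) - \<eta> * (- P i j) \<le> 1 - \<eta>"
  proof (rule bdf2_step_max_principle_upper[where Q = "\<lambda>i j. - Q i j", OF M h \<eta> stable _ _ _ ij])
    show "a * (- X i j - - P i j) - b * (- P i j - - Q i j) =
          \<epsilon>\<^sup>2 * lap_h h M (\<lambda>i j. - X i j) i j - fAC (- X i j)" if "i \<in> {1..M}" "j \<in> {1..M}" for i j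
      using scheme[OF that] by (simp add: lap_h_uminus fAC_uminus algebra_simps)
  qed (use P PQ in \<open>auto simp: abs_le_iff\<close>)
  ultimately show "\<bar>X i j - \<eta> * P i j\<bar> \<le> 1 - \<eta>" by (simp add: abs_le_iff)
  moreover have "\<bar>\<eta> * P i j\<bar> \<le> \<eta>" using P[OF ij] \<eta> by (simp add: abs_mult mult_left_le)
  ultimately show "\<bar>X i j\<bar> \<le> 1" by linarith
qed

text \<open>The invariant carried along the time steps is \<open>\<bar>U\<^sup>n - \<eta> U\<^sup>n\<^sup>-\<^sup>1\<bar> \<le> 1 - \<eta>\<close>, not just \<open>\<bar>U\<^sup>n\<bar> \<le> 1\<close>.\<close>
lemma bdf2_max_principle:
  fixes U :: "nat \<Rightarrow> nat \<Rightarrow> nat \<Rightarrow> real" and M N :: nat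
  assumes M: "M \<ge> 1" and h: "0 < h" and \<eta>: "0 < \<eta>" "\<eta> < 1"
    and stable: "\<And>n. n \<in> {1..N} \<Longrightarrow> stable_bdf2_step (2 + 4 * \<epsilon>\<^sup>2 / h\<^sup>2) \<eta> (a n) (b n)"
    and init: "\<And>i j. i \<in> {1..M} \<Longrightarrow> j \<in> {1..M} \<Longrightarrow> \<bar>U 0 i j\<bar> \<le> 1"
    and scheme: "\<And>n i j. n \<in> {1..N} \<Longrightarrow> i \<in> {1..M} \<Longrightarrow> j \<in> {1..M} \<Longrightarrow>
        a n * (U n i j - U (n - 1) i j) - b n * (U (n - 1) i j - U (n - 2) i j)
          = \<epsilon>\<^sup>2 * lap_h h M (U n) i j - fAC (U n i j)"
    and n: "n \<le> N" and ij: "i \<in> {1..M}" "j \<in> {1..M}"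
  shows "\<bar>U n i j\<bar> \<le> 1"
proof -
  have "\<forall>i\<in>{1..M}. \<forall>j\<in>{1..M}. \<bar>U n i j\<bar> \<le> 1 \<and> \<bar>U n i j - \<eta> * U (n - 1) i j\<bar> \<le> 1 - \<eta>"
    using n
  proof (induction n)
    case 0
    have "\<bar>U 0 i j - \<eta> * U 0 i j\<bar> = (1 - \<eta>) * \<bar>U 0 i j\<bar>" for i j
    proof -
      have "U 0 i j - \<eta> * U 0 i j = (1 - \<eta>) * U 0 i j" by (simp add: algebra_simps)
      then show ?thesis using \<eta> by (simp add: abs_mult)
    qed
    then show ?case using init \<eta> by (simp add: mult_left_le)
  next
    case (Suc n)
    then have n': "Suc n \<in> {1..N}" by simp
    have step: "a (Suc n) * (U (Suc n) i j - U n i j) - b (Suc n) * (U n i j - U (n - 1) i j)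
        = \<epsilon>\<^sup>2 * lap_h h M (U (Suc n)) i j - fAC (U (Suc n) i j)" if "i \<in> {1..M}" "j \<in> {1..M}" for i j
      using scheme[OF n' that] by simp
    show ?case
      using bdf2_step_max_principle[OF M h \<eta> stable[OF n'] _ _ step] Suc by simp
  qed
  then show ?thesis using ij by blast
qed

section \<open>Error propagation\<close>

text \<open>The error scheme at a grid maximum of \<open>V = E\<^sup>n - \<eta> E\<^sup>n\<^sup>-\<^sup>1\<close>: \<open>m\<close>, \<open>x\<close>, \<open>e1\<close>, \<open>e0\<close> are the
  values there of \<open>V\<close>, \<open>E\<^sup>n\<close>, \<open>E\<^sup>n\<^sup>-\<^sup>1\<close>, \<open>E\<^sup>n\<^sup>-\<^sup>2\<close>; \<open>sV\<close> and \<open>s1\<close> the neighbour sums of \<open>V\<close> and \<open>E\<^sup>n\<^sup>-\<^sup>1\<close>,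
  and \<open>N1\<close>, \<open>NV1\<close>, \<open>NR\<close> the grid norms of \<open>E\<^sup>n\<^sup>-\<^sup>1\<close>, \<open>E\<^sup>n\<^sup>-\<^sup>1 - \<eta> E\<^sup>n\<^sup>-\<^sup>2\<close> and the source.\<close>
lemma bdf2_error_at_max:
  fixes a b \<eta> k q x e0 e1 m sV s1 r N1 NV1 NR :: real
  assumes \<eta>: "0 < \<eta>" "\<eta> < 1" and stable: "stable_bdf2_step (2 + 4 * k) \<eta> a b" and k: "0 \<le> k"
    and q: "0 \<le> q" "q \<le> 3" and m: "0 \<le> m" and x: "x = m + \<eta> * e1"
    and sV: "sV \<le> 4 * m" and e1: "e1 \<le> N1" "0 \<le> N1" and s1: "s1 \<le> 4 * N1"
    and v1: "e1 - \<eta> * e0 \<le> NV1" and r: "r \<le> NR"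
    and eq: "a * (x - e1) - b * (e1 - e0) = k * ((sV + \<eta> * s1) - 4 * x) - (q - 1) * x + r"
  shows "(a - 1) * m \<le> ((1 - \<eta>) * (a - b / \<eta>) + \<eta>) * N1 + (b / \<eta>) * NV1 + NR"
proof -
  define c where "c = (1 - \<eta>) * (a - b / \<eta>)"
  define D where "D = c + \<eta> - \<eta> * q - 4 * k * \<eta>"
  have a: "1 < a" and b: "0 \<le> b" and c: "\<eta> * (2 + 4 * k) \<le> c"
    using stable by (auto simp: stable_bdf2_step_def c_def)
  have c': "c = a * (1 - \<eta>) + b - b / \<eta>" using \<eta> unfolding c_def by (simp add: field_simps)
  have "((a - 1 + q) * m + k * (4 * m - sV)) - (D * e1 + k * \<eta> * s1 + (b / \<eta>) * (e1 - \<eta> * e0) + r)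
      = (a * (x - e1) - b * (e1 - e0)) - (k * ((sV + \<eta> * s1) - 4 * x) - (q - 1) * x + r)"
    unfolding D_def c' x using \<eta> by (simp add: algebra_simps)
  then have id: "(a - 1 + q) * m + k * (4 * m - sV) = D * e1 + k * \<eta> * s1 + (b / \<eta>) * (e1 - \<eta> * e0) + r"
    using eq by simp
  have "\<eta> * q \<le> \<eta> * 3" using q \<eta> by simp
  then have "0 \<le> D" using c unfolding D_def by (simp add: algebra_simps)
  then have "D * e1 \<le> D * N1" using e1 by (simp add: mult_left_mono)
  moreover have "(a - 1) * m \<le> (a - 1 + q) * m + k * (4 * m - sV)"
  proof -
    have "0 \<le> q * m" "0 \<le> k * (4 * m - sV)" using q m k sV by simp_all
    then show ?thesis by (simp add: algebra_simps)
  qed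
  moreover have "k * \<eta> * s1 \<le> k * \<eta> * (4 * N1)" using k \<eta> s1 by (simp add: mult_left_mono)
  moreover have "(b / \<eta>) * (e1 - \<eta> * e0) \<le> (b / \<eta>) * NV1" using b \<eta> v1 by (intro mult_left_mono) auto
  moreover have "0 \<le> \<eta> * q * N1" using \<eta> q e1 by simp
  moreover have "D * N1 + k * \<eta> * (4 * N1) = (c + \<eta>) * N1 - \<eta> * q * N1"
    unfolding D_def by (simp add: algebra_simps)
  ultimately show ?thesis using id r unfolding c_def by linarith
qed

lemma bdf2_step_error_upper:
  fixes Ea Eb Ec q R :: "nat \<Rightarrow> nat \<Rightarrow> real" and M :: nat
  assumes M: "M \<ge> 1" and h: "0 < h" and \<eta>: "0 < \<eta>" "\<eta> < 1"
    and stable: "stable_bdf2_step (2 + 4 * \<epsilon>\<^sup>2 / h\<^sup>2) \<eta> a b"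
    and q: "\<And>i j. i \<in> {1..M} \<Longrightarrow> j \<in> {1..M} \<Longrightarrow> 0 \<le> q i j \<and> q i j \<le> 3"
    and eq: "\<And>i j. i \<in> {1..M} \<Longrightarrow> j \<in> {1..M} \<Longrightarrow>
       a * (Ec i j - Eb i j) - b * (Eb i j - Ea i j) = \<epsilon>\<^sup>2 * lap_h h M Ec i j - (q i j - 1) * Ec i j + R i j"
    and ij: "i \<in> {1..M}" "j \<in> {1..M}"
  shows "(a - 1) * (Ec i j - \<eta> * Eb i j) \<le> ((1 - \<eta>) * (a - b / \<eta>) + \<eta>) * grid_maxnorm M Eb
           + (b / \<eta>) * grid_maxnorm M (\<lambda>i j. Eb i j - \<eta> * Ea i j) + grid_maxnorm M R"
    (is "_ \<le> ?rhs")
proof -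
  define V where "V i j = Ec i j - \<eta> * Eb i j" for i j
  obtain i0 j0 where ij0: "i0 \<in> {1..M}" "j0 \<in> {1..M}"
    and max: "\<And>i j. i \<in> {1..M} \<Longrightarrow> j \<in> {1..M} \<Longrightarrow> V i j \<le> V i0 j0"
    using grid_attains_max[OF M, of V] by blast
  have a: "1 < a" using stable by (simp add: stable_bdf2_step_def)
  have "(a - 1) * V i0 j0 \<le> ?rhs"
  proof (cases "0 \<le> V i0 j0")
    case False
    have "0 \<le> 2 + 4 * \<epsilon>\<^sup>2 / h\<^sup>2" by simp
    note c0 = stable_bdf2_step_coeffs_nonneg(1)[OF stable \<eta>(1) this]
      and b0 = stable_bdf2_step_coeffs_nonneg(2)[OF stable \<eta>(1) this]
    have "0 \<le> ?rhs"
      using mult_nonneg_nonneg[OF c0 grid_maxnorm_nonneg[OF M, of Eb]]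
        mult_nonneg_nonneg[OF b0 grid_maxnorm_nonneg[OF M, of "\<lambda>i j. Eb i j - \<eta> * Ea i j"]]
        grid_maxnorm_nonneg[OF M, of R] by linarith
    moreover have "(a - 1) * V i0 j0 \<le> 0" using False a by (simp add: mult_nonneg_nonpos)
    ultimately show ?thesis by linarith
  next
    case True
    let ?nbs = "\<lambda>F. F (ip M i0) j0 + F (im M i0) j0 + F i0 (ip M j0) + F i0 (im M j0)"
    have nb: "ip M i0 \<in> {1..M}" "im M i0 \<in> {1..M}" "ip M j0 \<in> {1..M}" "im M j0 \<in> {1..M}"
      using ip_in_grid[OF M] im_in_grid[OF M] ij0 by auto
    have "lap_h h M Ec i0 j0 = ((?nbs V + \<eta> * ?nbs Eb) - 4 * Ec i0 j0) / h\<^sup>2"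
      unfolding lap_h_def V_def by (rule arg_cong[where f = "\<lambda>z. z / h\<^sup>2"]) (simp add: algebra_simps)
    then have "\<epsilon>\<^sup>2 * lap_h h M Ec i0 j0 = \<epsilon>\<^sup>2 / h\<^sup>2 * ((?nbs V + \<eta> * ?nbs Eb) - 4 * Ec i0 j0)"
      by simp
    with eq[OF ij0] have eq0: "a * (Ec i0 j0 - Eb i0 j0) - b * (Eb i0 j0 - Ea i0 j0)
        = \<epsilon>\<^sup>2 / h\<^sup>2 * ((?nbs V + \<eta> * ?nbs Eb) - 4 * Ec i0 j0) - (q i0 j0 - 1) * Ec i0 j0 + R i0 j0"
      by simp
    show ?thesis
    proof (rule bdf2_error_at_max[OF \<eta> _ _ q[OF ij0, THEN conjunct1] q[OF ij0, THEN conjunct2] True _ _ _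
          grid_maxnorm_nonneg[OF M] _ _ _ eq0])
      show "stable_bdf2_step (2 + 4 * (\<epsilon>\<^sup>2 / h\<^sup>2)) \<eta> a b" using stable by simp
      show "?nbs V \<le> 4 * V i0 j0" using max nb ij0 by (smt (verit))
      show "?nbs Eb \<le> 4 * grid_maxnorm M Eb"
        using abs_le_grid_maxnorm[of _ M _ Eb] nb ij0 by (smt (verit))
      show "Eb i0 j0 \<le> grid_maxnorm M Eb" "R i0 j0 \<le> grid_maxnorm M R"
        "Eb i0 j0 - \<eta> * Ea i0 j0 \<le> grid_maxnorm M (\<lambda>i j. Eb i j - \<eta> * Ea i j)"
        using abs_le_grid_maxnorm[OF ij0, of Eb] abs_le_grid_maxnorm[OF ij0, of R]
          abs_le_grid_maxnorm[OF ij0, of "\<lambda>i j. Eb i j - \<eta> * Ea i j"] by auto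
    qed (auto simp: V_def)
  qed
  moreover have "(a - 1) * V i j \<le> (a - 1) * V i0 j0" using max[OF ij] a by simp
  ultimately show ?thesis unfolding V_def by linarith
qed

lemma bdf2_step_error:
  fixes Ea Eb Ec q R :: "nat \<Rightarrow> nat \<Rightarrow> real" and M :: nat
  assumes M: "M \<ge> 1" and h: "0 < h" and \<eta>: "0 < \<eta>" "\<eta> < 1"
    and stable: "stable_bdf2_step (2 + 4 * \<epsilon>\<^sup>2 / h\<^sup>2) \<eta> a b"
    and q: "\<And>i j. i \<in> {1..M} \<Longrightarrow> j \<in> {1..M} \<Longrightarrow> 0 \<le> q i j \<and> q i j \<le> 3"
    and eq: "\<And>i j. i \<in> {1..M} \<Longrightarrow> j \<in> {1..M} \<Longrightarrow>
       a * (Ec i j - Eb i j) - b * (Eb i j - Ea i j) = \<epsilon>\<^sup>2 * lap_h h M Ec i j - (q i j - 1) * Ec i j + R i j"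
  shows "(a - 1) * grid_maxnorm M (\<lambda>i j. Ec i j - \<eta> * Eb i j)
           \<le> ((1 - \<eta>) * (a - b / \<eta>) + \<eta>) * grid_maxnorm M Eb
             + (b / \<eta>) * grid_maxnorm M (\<lambda>i j. Eb i j - \<eta> * Ea i j) + grid_maxnorm M R"
    (is "_ \<le> ?rhs")
proof -
  have a: "0 < a - 1" using stable by (simp add: stable_bdf2_step_def)
  have "(a - 1) * \<bar>Ec i j - \<eta> * Eb i j\<bar> \<le> ?rhs" if ij: "i \<in> {1..M}" "j \<in> {1..M}" for i j
  proof -
    have "(a - 1) * (Ec i j - \<eta> * Eb i j) \<le> ?rhs"
      by (rule bdf2_step_error_upper[OF M h \<eta> stable q eq ij])
    moreover have "(a - 1) * ((- Ec i j) - \<eta> * (- Eb i j)) \<le> ?rhs"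
    proof -
      have "(a - 1) * ((- Ec i j) - \<eta> * (- Eb i j)) \<le> ((1 - \<eta>) * (a - b / \<eta>) + \<eta>) * grid_maxnorm M (\<lambda>i j. - Eb i j)
          + (b / \<eta>) * grid_maxnorm M (\<lambda>i j. - Eb i j - \<eta> * - Ea i j) + grid_maxnorm M (\<lambda>i j. - R i j)"
      proof (rule bdf2_step_error_upper[where Ea = "\<lambda>i j. - Ea i j", OF M h \<eta> stable q _ ij])
        show "a * (- Ec i j - - Eb i j) - b * (- Eb i j - - Ea i j) =
            \<epsilon>\<^sup>2 * lap_h h M (\<lambda>i j. - Ec i j) i j - (q i j - 1) * - Ec i j + - R i j"
          if "i \<in> {1..M}" "j \<in> {1..M}" for i j
          using eq[OF that] by (simp add: lap_h_uminus algebra_simps)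
      qed
      then show ?thesis
        using grid_maxnorm_uminus[of M "\<lambda>i j. Eb i j - \<eta> * Ea i j"] by (simp add: grid_maxnorm_uminus)
    qed
    ultimately show ?thesis by (simp add: abs_if algebra_simps split: if_splits)
  qed
  then have "grid_maxnorm M (\<lambda>i j. Ec i j - \<eta> * Eb i j) \<le> ?rhs / (a - 1)"
    using a by (intro grid_maxnorm_le[OF M]) (simp add: pos_le_divide_eq mult.commute)
  then show ?thesis using a by (simp add: pos_le_divide_eq mult.commute)
qed

lemma discrete_gronwall_step:
  fixes a \<tau> \<eta> \<rho> s X :: real
  assumes a: "1 / (2 * \<tau>) \<le> a - 1" "1 < a" and \<tau>: "0 < \<tau>" and \<eta>: "0 < \<eta>" "\<eta> < 1"
    and \<rho>: "0 \<le> \<rho>" and s: "0 \<le> s"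
    and ineq: "(a - 1) * X \<le> (a + \<eta> / (1 - \<eta>)) * (2 * \<rho> * s * exp (2 * s / (1 - \<eta>))) + \<rho>"
  shows "X \<le> 2 * \<rho> * (s + \<tau>) * exp (2 * (s + \<tau>) / (1 - \<eta>))"
proof -
  define B where "B = 2 * \<rho> * s * exp (2 * s / (1 - \<eta>))"
  define P where "P = B / (1 - \<eta>) + \<rho>"
  have "0 \<le> P" using \<rho> s \<eta> by (simp add: P_def B_def)
  have "a + \<eta> / (1 - \<eta>) = (a - 1) + 1 / (1 - \<eta>)" using \<eta> by (simp add: field_simps)
  with ineq have "(a - 1) * (X - B) \<le> P" by (simp add: B_def P_def algebra_simps)
  then have "X - B \<le> P / (a - 1)" using a by (simp add: pos_le_divide_eq mult.commute)
  also have "\<dots> \<le> P * (2 * \<tau>)"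
  proof -
    have "1 / (a - 1) \<le> 1 / (1 / (2 * \<tau>))"
      by (rule divide_left_mono[OF a(1)]) (use a \<tau> in auto)
    then have "1 / (a - 1) \<le> 2 * \<tau>" by simp
    from mult_left_mono[OF this \<open>0 \<le> P\<close>] show ?thesis by simp
  qed
  finally have X: "X \<le> B + 2 * \<tau> * P" by (simp add: algebra_simps)
  have "exp (2 * (s + \<tau>) / (1 - \<eta>)) = exp (2 * s / (1 - \<eta>)) * exp (2 * \<tau> / (1 - \<eta>))"
    by (simp add: exp_add[symmetric] add_divide_distrib distrib_left)
  then have "2 * \<rho> * (s + \<tau>) * exp (2 * (s + \<tau>) / (1 - \<eta>))
      = B * exp (2 * \<tau> / (1 - \<eta>)) + 2 * \<rho> * \<tau> * exp (2 * (s + \<tau>) / (1 - \<eta>))"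
    by (simp add: B_def algebra_simps)
  also have "\<dots> \<ge> B * (1 + 2 * \<tau> / (1 - \<eta>)) + 2 * \<rho> * \<tau> * 1"
    using exp_ge_add_one_self[of "2 * \<tau> / (1 - \<eta>)"] \<rho> s \<tau> \<eta>
    by (intro add_mono mult_left_mono) (auto simp: B_def)
  finally have "B + 2 * \<tau> * P \<le> 2 * \<rho> * (s + \<tau>) * exp (2 * (s + \<tau>) / (1 - \<eta>))"
    using \<eta> by (simp add: P_def field_simps)
  with X show ?thesis by linarith
qed

lemma bdf2_error_step_bound:
  fixes Ea Eb Ec q R :: "nat \<Rightarrow> nat \<Rightarrow> real" and M :: nat
  assumes M: "M \<ge> 1" and h: "0 < h" and \<eta>: "0 < \<eta>" "\<eta> < 1"
    and stable: "stable_bdf2_step (2 + 4 * \<epsilon>\<^sup>2 / h\<^sup>2) \<eta> a b"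
    and gain: "1 / (2 * \<tau>) \<le> a - 1" and \<tau>: "0 < \<tau>"
    and q: "\<And>i j. i \<in> {1..M} \<Longrightarrow> j \<in> {1..M} \<Longrightarrow> 0 \<le> q i j \<and> q i j \<le> 3"
    and eq: "\<And>i j. i \<in> {1..M} \<Longrightarrow> j \<in> {1..M} \<Longrightarrow>
       a * (Ec i j - Eb i j) - b * (Eb i j - Ea i j) = \<epsilon>\<^sup>2 * lap_h h M Ec i j - (q i j - 1) * Ec i j + R i j"
    and R: "grid_maxnorm M R \<le> \<rho>" and \<rho>: "0 \<le> \<rho>" and s: "0 \<le> s"
    and prev: "grid_maxnorm M (\<lambda>i j. Eb i j - \<eta> * Ea i j) \<le> 2 * \<rho> * s * exp (2 * s / (1 - \<eta>))"
      "grid_maxnorm M Eb \<le> 2 * \<rho> * s * exp (2 * s / (1 - \<eta>)) / (1 - \<eta>)"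
  shows "grid_maxnorm M (\<lambda>i j. Ec i j - \<eta> * Eb i j) \<le> 2 * \<rho> * (s + \<tau>) * exp (2 * (s + \<tau>) / (1 - \<eta>))"
    and "grid_maxnorm M Ec \<le> 2 * \<rho> * (s + \<tau>) * exp (2 * (s + \<tau>) / (1 - \<eta>)) / (1 - \<eta>)"
proof -
  define B where "B r = 2 * \<rho> * r * exp (2 * r / (1 - \<eta>))" for r
  define c where "c = (1 - \<eta>) * (a - b / \<eta>) + \<eta>"
  have c: "0 \<le> c" and b: "0 \<le> b / \<eta>"
    using stable_bdf2_step_coeffs_nonneg[OF stable \<eta>(1)] by (simp_all add: c_def)
  have "(a - 1) * grid_maxnorm M (\<lambda>i j. Ec i j - \<eta> * Eb i j)
      \<le> c * grid_maxnorm M Eb + (b / \<eta>) * grid_maxnorm M (\<lambda>i j. Eb i j - \<eta> * Ea i j) + grid_maxnorm M R"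
    using bdf2_step_error[OF M h \<eta> stable q eq] by (simp add: c_def)
  also have "\<dots> \<le> c * (B s / (1 - \<eta>)) + (b / \<eta>) * B s + \<rho>"
    using prev R c b unfolding B_def by (intro add_mono mult_left_mono) auto
  also have "\<dots> = (a + \<eta> / (1 - \<eta>)) * B s + \<rho>"
    using \<eta> by (simp add: c_def field_simps)
  finally show v: "grid_maxnorm M (\<lambda>i j. Ec i j - \<eta> * Eb i j) \<le> B (s + \<tau>)"
    using discrete_gronwall_step[OF gain _ \<tau> \<eta> \<rho> s] stable by (simp add: B_def stable_bdf2_step_def)
  have "B s \<le> B (s + \<tau>)"
    using s \<tau> \<rho> \<eta> unfolding B_def by (intro mult_mono) (auto intro: mult_left_mono divide_right_mono)
  then have "grid_maxnorm M Eb \<le> B (s + \<tau>) / (1 - \<eta>)"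
    using prev(2) \<eta> unfolding B_def[symmetric] by (smt (verit) divide_right_mono)
  have "grid_maxnorm M Ec \<le> grid_maxnorm M (\<lambda>i j. Ec i j - \<eta> * Eb i j) + \<eta> * grid_maxnorm M Eb"
    using grid_maxnorm_add_scaled[OF M, of \<eta> "\<lambda>i j. Ec i j - \<eta> * Eb i j" Eb] \<eta> by simp
  also have "\<dots> \<le> B (s + \<tau>) + \<eta> * (B (s + \<tau>) / (1 - \<eta>))"
    using v \<open>grid_maxnorm M Eb \<le> B (s + \<tau>) / (1 - \<eta>)\<close> \<eta> by (intro add_mono mult_left_mono) auto
  also have "\<dots> = B (s + \<tau>) / (1 - \<eta>)" using \<eta> by (simp add: field_simps)
  finally show "grid_maxnorm M Ec \<le> B (s + \<tau>) / (1 - \<eta>)" .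
qed

lemma bdf2_error_bound:
  fixes e q R :: "nat \<Rightarrow> nat \<Rightarrow> nat \<Rightarrow> real" and t :: "nat \<Rightarrow> real" and M N :: nat
  assumes M: "M \<ge> 1" and h: "0 < h" and \<eta>: "0 < \<eta>" "\<eta> < 1"
    and stable: "\<And>n. n \<in> {1..N} \<Longrightarrow> stable_bdf2_step (2 + 4 * \<epsilon>\<^sup>2 / h\<^sup>2) \<eta> (a n) (b n)"
    and gain: "\<And>n. n \<in> {1..N} \<Longrightarrow> 1 / (2 * tau t n) \<le> a n - 1"
    and t0: "t 0 = 0" and inc: "\<forall>k\<in>{1..N}. t (k - 1) < t k"
    and e0: "\<And>i j. e 0 i j = 0"
    and q: "\<And>n i j. n \<in> {1..N} \<Longrightarrow> i \<in> {1..M} \<Longrightarrow> j \<in> {1..M} \<Longrightarrow> 0 \<le> q n i j \<and> q n i j \<le> 3"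
    and R: "\<And>n. n \<in> {1..N} \<Longrightarrow> grid_maxnorm M (R n) \<le> \<rho>" and \<rho>: "0 \<le> \<rho>"
    and eq: "\<And>n i j. n \<in> {1..N} \<Longrightarrow> i \<in> {1..M} \<Longrightarrow> j \<in> {1..M} \<Longrightarrow>
        a n * (e n i j - e (n - 1) i j) - b n * (e (n - 1) i j - e (n - 2) i j)
          = \<epsilon>\<^sup>2 * lap_h h M (e n) i j - (q n i j - 1) * e n i j + R n i j"
    and n: "n \<le> N"
  shows "grid_maxnorm M (e n) \<le> 2 * \<rho> * t n * exp (2 * t n / (1 - \<eta>)) / (1 - \<eta>)"
proof -
  have "grid_maxnorm M (\<lambda>i j. e n i j - \<eta> * e (n - 1) i j) \<le> 2 * \<rho> * t n * exp (2 * t n / (1 - \<eta>))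
      \<and> grid_maxnorm M (e n) \<le> 2 * \<rho> * t n * exp (2 * t n / (1 - \<eta>)) / (1 - \<eta>)"
    using n
  proof (induction n)
    case 0
    show ?case using grid_maxnorm_le[OF M, of _ 0] by (simp add: e0 t0)
  next
    case (Suc n)
    then have n': "Suc n \<in> {1..N}" by simp
    have eq': "a (Suc n) * (e (Suc n) i j - e n i j) - b (Suc n) * (e n i j - e (n - 1) i j)
        = \<epsilon>\<^sup>2 * lap_h h M (e (Suc n)) i j - (q (Suc n) i j - 1) * e (Suc n) i j + R (Suc n) i j"
      if "i \<in> {1..M}" "j \<in> {1..M}" for i j
      using eq[OF n' that] by simp
    have "0 \<le> t n" using mesh_mono[OF inc, of 0 n] t0 Suc.prems by simp
    note IH = Suc.IH[OF Suc_leD[OF Suc.prems]]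
    note step = bdf2_error_step_bound[where Ea = "e (n - 1)" and Eb = "e n" and Ec = "e (Suc n)",
        OF M h \<eta> stable[OF n'] gain[OF n'] tau_pos[OF inc n'] q[OF n'] eq' R[OF n'] \<rho> \<open>0 \<le> t n\<close>
        IH[THEN conjunct1] IH[THEN conjunct2]]
    have "t n + tau t (Suc n) = t (Suc n)" by (simp add: tau_def)
    with step show ?case by simp
  qed
  then show ?thesis by simp
qed

section \<open>Truncation error\<close>

lemma Taylor_remainder_bound:
  fixes f :: "real \<Rightarrow> real" and diff :: "nat \<Rightarrow> real \<Rightarrow> real"
  assumes n: "0 < n" and diff0: "diff 0 = f"
    and deriv: "\<And>m s. m < n \<Longrightarrow> (diff m has_real_derivative diff (Suc m) s) (at s)"
    and bound: "\<And>s. min c d \<le> s \<Longrightarrow> s \<le> max c d \<Longrightarrow> \<bar>diff n s\<bar> \<le> K"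
  shows "\<bar>f d - (\<Sum>m<n. diff m c / fact m * (d - c) ^ m)\<bar> \<le> K * \<bar>d - c\<bar> ^ n / fact n"
proof -
  have remainder: "\<bar>diff n s / fact n * (d - c) ^ n\<bar> \<le> K * \<bar>d - c\<bar> ^ n / fact n"
    if "min c d \<le> s" "s \<le> max c d" for s
    using bound[OF that] by (simp add: abs_mult power_abs divide_right_mono mult_right_mono)
  consider "c < d" | "d < c" | "d = c" by linarith
  then show ?thesis
  proof cases
    case 1
    have "\<forall>m t. m < n \<and> c \<le> t \<and> t \<le> d \<longrightarrow> (diff m has_real_derivative diff (Suc m) t) (at t)"
      using deriv by blast
    then obtain s where "c < s" "s < d"
      and "f d = (\<Sum>m<n. diff m c / fact m * (d - c) ^ m) + diff n s / fact n * (d - c) ^ n"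
      using Taylor_up[where n = n and diff = diff and f = f and a = c and b = d and c = c, OF n diff0] 1
      by auto
    then show ?thesis using remainder[of s] by simp
  next
    case 2
    have "\<forall>m t. m < n \<and> d \<le> t \<and> t \<le> c \<longrightarrow> (diff m has_real_derivative diff (Suc m) t) (at t)"
      using deriv by blast
    then obtain s where "d < s" "s < c"
      and "f d = (\<Sum>m<n. diff m c / fact m * (d - c) ^ m) + diff n s / fact n * (d - c) ^ n"
      using Taylor_down[where n = n and diff = diff and f = f and a = d and b = c and c = c, OF n diff0] 2
      by auto
    then show ?thesis using remainder[of s] by simp
  next
    case 3
    obtain n' where "n = Suc n'" using n gr0_implies_Suc by blast
    then show ?thesis using 3 diff0 by (simp add: sum.lessThan_Suc_shift)
  qed
qed

lemma central_difference_bound: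
  fixes f :: "real \<Rightarrow> real" and diff :: "nat \<Rightarrow> real \<Rightarrow> real"
  assumes diff0: "diff 0 = f"
    and deriv: "\<And>m s. m < 4 \<Longrightarrow> (diff m has_real_derivative diff (Suc m) s) (at s)"
    and bound: "\<And>s. x - h \<le> s \<Longrightarrow> s \<le> x + h \<Longrightarrow> \<bar>diff 4 s\<bar> \<le> K" and h: "0 < h"
  shows "\<bar>f (x + h) + f (x - h) - 2 * f x - h\<^sup>2 * diff 2 x\<bar> \<le> K * h ^ 4 / 12"
proof -
  have "\<bar>f d - (f x + (d - x) * diff 1 x + (d - x)\<^sup>2 / 2 * diff 2 x + (d - x) ^ 3 / 6 * diff 3 x)\<bar>
      \<le> K * h ^ 4 / 24" if "d = x + h \<or> d = x - h" for d
    using Taylor_remainder_bound[of 4 diff f, OF _ diff0 deriv, of x d K] bound that h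
    by (auto simp: eval_nat_numeral fact_numeral diff0 field_simps)
  from this[of "x + h"] this[of "x - h"]
  have "\<bar>f (x + h) - (f x + h * diff 1 x + h\<^sup>2 / 2 * diff 2 x + h ^ 3 / 6 * diff 3 x)\<bar> \<le> K * h ^ 4 / 24"
    "\<bar>f (x - h) - (f x - h * diff 1 x + h\<^sup>2 / 2 * diff 2 x - h ^ 3 / 6 * diff 3 x)\<bar> \<le> K * h ^ 4 / 24"
    by simp_all
  then show ?thesis
    unfolding abs_le_iff by linarith
qed

lemma backward_difference_bound:
  fixes \<phi> :: "real \<Rightarrow> real" and diff :: "nat \<Rightarrow> real \<Rightarrow> real"
  assumes diff0: "diff 0 = \<phi>"
    and deriv: "\<And>m s. m < 2 \<Longrightarrow> (diff m has_real_derivative diff (Suc m) s) (at s)"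
    and bound: "\<And>s. t - \<tau> \<le> s \<Longrightarrow> s \<le> t \<Longrightarrow> \<bar>diff 2 s\<bar> \<le> K" and \<tau>: "0 < \<tau>"
  shows "\<bar>(\<phi> t - \<phi> (t - \<tau>)) / \<tau> - diff 1 t\<bar> \<le> K * \<tau> / 2"
proof -
  have "\<bar>\<phi> (t - \<tau>) - (\<phi> t - \<tau> * diff 1 t)\<bar> \<le> K * \<tau>\<^sup>2 / 2"
    using Taylor_remainder_bound[of 2 diff \<phi>, OF _ diff0 deriv, of t "t - \<tau>" K] bound \<tau>
    by (simp add: eval_nat_numeral diff0 mult.commute)
  then have "\<bar>\<phi> t - \<tau> * diff 1 t - \<phi> (t - \<tau>)\<bar> / \<tau> \<le> K * \<tau>\<^sup>2 / 2 / \<tau>"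
    by (intro divide_right_mono) (use \<tau> in \<open>simp_all add: abs_minus_commute\<close>)
  moreover have "(\<phi> t - \<phi> (t - \<tau>)) / \<tau> - diff 1 t = (\<phi> t - \<tau> * diff 1 t - \<phi> (t - \<tau>)) / \<tau>"
    using \<tau> by (simp add: field_simps)
  ultimately show ?thesis
    using \<tau> by (simp add: abs_divide power2_eq_square)
qed

lemma bdf2_coeff_identities:
  fixes \<tau> \<tau>' :: real
  assumes \<tau>: "0 < \<tau>" "0 < \<tau>'"
  defines "r \<equiv> \<tau> / \<tau>'"
  defines "a \<equiv> (1 + 2 * r) / (\<tau> * (1 + r))" and "b \<equiv> r\<^sup>2 / (\<tau> * (1 + r))"
  shows "a * \<tau> - b * \<tau>' = 1"
    and "(a + b) * \<tau>\<^sup>2 = b * (\<tau> + \<tau>')\<^sup>2"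
    and "(a + b) * \<tau> ^ 3 + b * (\<tau> + \<tau>') ^ 3 = (1 + r) * \<tau>\<^sup>2 + \<tau> * \<tau>' * (1 + r)\<^sup>2"
proof -
  have r: "0 < r" "\<tau> = r * \<tau>'" using \<tau> by (simp_all add: r_def)
  have D: "\<tau> * (1 + r) \<noteq> 0" "\<tau>' \<noteq> 0" using \<tau> r by auto
  show "a * \<tau> - b * \<tau>' = 1" "(a + b) * \<tau>\<^sup>2 = b * (\<tau> + \<tau>')\<^sup>2"
    "(a + b) * \<tau> ^ 3 + b * (\<tau> + \<tau>') ^ 3 = (1 + r) * \<tau>\<^sup>2 + \<tau> * \<tau>' * (1 + r)\<^sup>2"
    unfolding a_def b_def using D
    by (simp_all add: divide_simps, simp_all add: r(2) power2_eq_square power3_eq_cube algebra_simps)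
qed

lemma bdf2_difference_bound:
  fixes \<phi> :: "real \<Rightarrow> real" and diff :: "nat \<Rightarrow> real \<Rightarrow> real"
  assumes diff0: "diff 0 = \<phi>"
    and deriv: "\<And>m s. m < 3 \<Longrightarrow> (diff m has_real_derivative diff (Suc m) s) (at s)"
    and bound: "\<And>s. t - (\<tau> + \<tau>') \<le> s \<Longrightarrow> s \<le> t \<Longrightarrow> \<bar>diff 3 s\<bar> \<le> K"
    and \<tau>: "0 < \<tau>" "0 < \<tau>'" "\<tau> \<le> m" "\<tau>' \<le> m" "\<tau> / \<tau>' \<le> 3"
  defines "r \<equiv> \<tau> / \<tau>'"
  shows "\<bar>(1 + 2 * r) / (\<tau> * (1 + r)) * (\<phi> t - \<phi> (t - \<tau>))
          - r\<^sup>2 / (\<tau> * (1 + r)) * (\<phi> (t - \<tau>) - \<phi> (t - (\<tau> + \<tau>'))) - diff 1 t\<bar> \<le> 4 * K * m\<^sup>2"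
proof -
  define a where "a = (1 + 2 * r) / (\<tau> * (1 + r))"
  define b where "b = r\<^sup>2 / (\<tau> * (1 + r))"
  define T where "T \<sigma> = \<phi> (t - \<sigma>) - (\<phi> t - \<sigma> * diff 1 t + \<sigma>\<^sup>2 / 2 * diff 2 t)" for \<sigma>
  note co = bdf2_coeff_identities[OF \<tau>(1,2), folded r_def, folded a_def b_def]
  have r: "0 < r" "r \<le> 3" using \<tau> by (simp_all add: r_def)
  have ab: "0 \<le> a" "0 \<le> b" using r \<tau> by (simp_all add: a_def b_def)
  have K: "0 \<le> K" using bound[of t] \<tau> by force
  have T: "\<bar>T \<sigma>\<bar> \<le> K * \<sigma> ^ 3 / 6" if "0 < \<sigma>" "\<sigma> \<le> \<tau> + \<tau>'" for \<sigma>
    using Taylor_remainder_bound[of 3 diff \<phi>, OF _ diff0 deriv, of t "t - \<sigma>" K] bound that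
    by (simp add: T_def eval_nat_numeral fact_numeral diff0 field_simps)
  have "a * (\<phi> t - \<phi> (t - \<tau>)) - b * (\<phi> (t - \<tau>) - \<phi> (t - (\<tau> + \<tau>'))) - diff 1 t
      = (a * \<tau> - b * \<tau>' - 1) * diff 1 t - ((a + b) * \<tau>\<^sup>2 - b * (\<tau> + \<tau>')\<^sup>2) / 2 * diff 2 t
        - (a + b) * T \<tau> + b * T (\<tau> + \<tau>')"
    unfolding T_def by (simp add: field_simps)
  also have "\<dots> = - ((a + b) * T \<tau>) + b * T (\<tau> + \<tau>')" using co(1,2) by simp
  finally have "\<bar>a * (\<phi> t - \<phi> (t - \<tau>)) - b * (\<phi> (t - \<tau>) - \<phi> (t - (\<tau> + \<tau>'))) - diff 1 t\<bar>
      \<le> (a + b) * \<bar>T \<tau>\<bar> + b * \<bar>T (\<tau> + \<tau>')\<bar>"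
    using ab abs_triangle_ineq[of "- ((a + b) * T \<tau>)" "b * T (\<tau> + \<tau>')"] by (simp add: abs_mult)
  also have "\<dots> \<le> (a + b) * (K * \<tau> ^ 3 / 6) + b * (K * (\<tau> + \<tau>') ^ 3 / 6)"
    using ab T \<tau> by (intro add_mono mult_left_mono) auto
  also have "\<dots> = K / 6 * ((a + b) * \<tau> ^ 3 + b * (\<tau> + \<tau>') ^ 3)" by (simp add: algebra_simps)
  also have "\<dots> = K / 6 * ((1 + r) * \<tau>\<^sup>2 + \<tau> * \<tau>' * (1 + r)\<^sup>2)" by (simp only: co(3))
  also have "\<dots> \<le> K / 6 * (4 * m\<^sup>2 + m * m * 4\<^sup>2)"
    using K r \<tau> by (intro mult_left_mono add_mono mult_mono power_mono) auto
  also have "\<dots> \<le> 4 * K * m\<^sup>2" using K by (simp add: power2_eq_square field_simps)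
  finally show ?thesis unfolding a_def b_def .
qed

lemma D2_sample_truncation_bound:
  fixes t :: "nat \<Rightarrow> real" and \<phi> :: "real \<Rightarrow> real" and diff :: "nat \<Rightarrow> real \<Rightarrow> real"
  assumes diff0: "diff 0 = \<phi>"
    and deriv: "\<And>m s. m < 3 \<Longrightarrow> (diff m has_real_derivative diff (Suc m) s) (at s)"
    and K2: "\<And>s. 0 \<le> s \<Longrightarrow> s \<le> t N \<Longrightarrow> \<bar>diff 2 s\<bar> \<le> K2"
    and K3: "\<And>s. 0 \<le> s \<Longrightarrow> s \<le> t N \<Longrightarrow> \<bar>diff 3 s\<bar> \<le> K3"
    and t0: "t 0 = 0" and inc: "\<forall>k\<in>{1..N}. t (k - 1) < t k"
    and ratio: "\<And>k. k \<in> {2..N} \<Longrightarrow> ratio t k \<le> 3" and n: "n \<in> {1..N}"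
  shows "\<bar>D2 t (\<lambda>n i j. \<phi> (t n)) n i j - diff 1 (t n)\<bar> \<le> K2 * tau t 1 / 2 + 4 * K3 * (tau_max t N)\<^sup>2"
proof -
  have t_range: "0 \<le> t k" "t k \<le> t N" if "k \<le> N" for k
    using mesh_mono[OF inc, of 0 k] mesh_mono[OF inc, of k N] that t0 by auto
  have "0 \<le> K2" "0 \<le> K3" using K2[of 0] K3[of 0] t_range[of N] by auto
  show ?thesis
  proof (cases "n = 1")
    case True
    have "\<bar>(\<phi> (t 1) - \<phi> (t 1 - tau t 1)) / tau t 1 - diff 1 (t 1)\<bar> \<le> K2 * tau t 1 / 2"
      by (rule backward_difference_bound[OF diff0 deriv K2 tau_pos[OF inc n[unfolded True]]])
         (use t_range[of 1] n in \<open>auto simp: tau_def t0\<close>)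
    moreover have "D2 t (\<lambda>n i j. \<phi> (t n)) 1 i j = (\<phi> (t 1) - \<phi> (t 1 - tau t 1)) / tau t 1"
      by (simp add: D2_def tau_def)
    moreover have "0 \<le> 4 * K3 * (tau_max t N)\<^sup>2" using \<open>0 \<le> K3\<close> by simp
    ultimately show ?thesis using True by simp
  next
    case False
    define \<tau> \<tau>' where "\<tau> = tau t n" and "\<tau>' = tau t (n - 1)"
    have n': "n - 1 \<in> {1..N}" "2 \<le> n" "n - 2 \<le> N" using n False by auto
    have "n - 1 - 1 = n - 2" by simp
    then have t_prev: "t (n - 1) = t n - \<tau>" "t (n - 2) = t n - (\<tau> + \<tau>')"
      by (simp_all add: \<tau>_def \<tau>'_def tau_def)
    have r: "ratio t n = \<tau> / \<tau>'" using n' by (simp add: ratio_def \<tau>_def \<tau>'_def)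
    have "\<bar>(1 + 2 * (\<tau> / \<tau>')) / (\<tau> * (1 + \<tau> / \<tau>')) * (\<phi> (t n) - \<phi> (t n - \<tau>))
          - (\<tau> / \<tau>')\<^sup>2 / (\<tau> * (1 + \<tau> / \<tau>')) * (\<phi> (t n - \<tau>) - \<phi> (t n - (\<tau> + \<tau>'))) - diff 1 (t n)\<bar>
          \<le> 4 * K3 * (tau_max t N)\<^sup>2"
    proof (rule bdf2_difference_bound[OF diff0 deriv])
      show "\<bar>diff 3 s\<bar> \<le> K3" if "t n - (\<tau> + \<tau>') \<le> s" "s \<le> t n" for s
        using K3[of s] that t_prev(2) t_range[OF n'(3)] t_range[of n] n by force
      show "0 < \<tau>" "0 < \<tau>'" using tau_pos[OF inc] n n' by (auto simp: \<tau>_def \<tau>'_def)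
      show "\<tau> \<le> tau_max t N" "\<tau>' \<le> tau_max t N"
        using tau_le_tau_max n n' by (auto simp: \<tau>_def \<tau>'_def)
      show "\<tau> / \<tau>' \<le> 3" using ratio[of n] n n' r by auto
    qed
    moreover have "D2 t (\<lambda>n i j. \<phi> (t n)) n i j
        = (1 + 2 * (\<tau> / \<tau>')) / (\<tau> * (1 + \<tau> / \<tau>')) * (\<phi> (t n) - \<phi> (t n - \<tau>))
          - (\<tau> / \<tau>')\<^sup>2 / (\<tau> * (1 + \<tau> / \<tau>')) * (\<phi> (t n - \<tau>) - \<phi> (t n - (\<tau> + \<tau>')))"
      unfolding D2_eq_bdf2_coeffs[OF n'(2)[THEN order_trans[OF one_le_numeral]]] bdf2_a_def bdf2_b_def
        r t_prev \<tau>_def[symmetric] ..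
    moreover have "0 \<le> K2 * tau t 1 / 2"
      using \<open>0 \<le> K2\<close> tau_pos[OF inc, of 1] n by simp
    ultimately show ?thesis by linarith
  qed
qed

lemma lap_h_truncation_bound:
  fixes u :: "real \<times> real \<times> real \<Rightarrow> real"
  assumes L: "0 < L" and M: "1 \<le> M" and u: "smooth_fun u"
    and per_x: "\<And>x y s. u (x + L, y, s) = u (x, y, s)"
    and per_y: "\<And>x y s. u (x, y + L, s) = u (x, y, s)"
    and K4x: "\<And>x y. x \<in> {0..2 * L} \<Longrightarrow> y \<in> {0..2 * L} \<Longrightarrow> \<bar>(partial_x ^^ 4) u (x, y, s)\<bar> \<le> K4x"
    and K4y: "\<And>x y. x \<in> {0..2 * L} \<Longrightarrow> y \<in> {0..2 * L} \<Longrightarrow> \<bar>(partial_y ^^ 4) u (x, y, s)\<bar> \<le> K4y"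
    and ij: "i \<in> {1..M}" "j \<in> {1..M}"
  defines "h \<equiv> L / real M"
  shows "\<bar>lap_h h M (\<lambda>i j. u (real i * h, real j * h, s)) i j
      - ((partial_x ^^ 2) u (real i * h, real j * h, s) + (partial_y ^^ 2) u (real i * h, real j * h, s))\<bar>
      \<le> (K4x + K4y) * h\<^sup>2 / 12"
proof -
  define x where "x = real i * h"
  define y where "y = real j * h"
  have h: "0 < h" using L M by (simp add: h_def)
  have x: "h \<le> x" "x + h \<le> 2 * L" and y: "h \<le> y" "y + h \<le> 2 * L"
  proof -
    have "real i * h \<le> L" "real j * h \<le> L"
      using ij M h mult_right_mono[of "real i" "real M" h] mult_right_mono[of "real j" "real M" h]
      by (auto simp: h_def)
    moreover have "h \<le> L" using L M by (simp add: h_def divide_le_eq)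
    ultimately show "h \<le> x" "x + h \<le> 2 * L" "h \<le> y" "y + h \<le> 2 * L"
      using ij h by (auto simp: x_def y_def)
  qed
  have "\<bar>u (x + h, y, s) + u (x - h, y, s) - 2 * u (x, y, s) - h\<^sup>2 * (partial_x ^^ 2) u (x, y, s)\<bar> \<le> K4x * h ^ 4 / 12"
    by (rule central_difference_bound[where diff = "\<lambda>m r. (partial_x ^^ m) u (r, y, s)"])
       (use smooth_fun_has_funpow_partial_x[OF u] K4x x y h in auto)
  moreover have "\<bar>u (x, y + h, s) + u (x, y - h, s) - 2 * u (x, y, s) - h\<^sup>2 * (partial_y ^^ 2) u (x, y, s)\<bar> \<le> K4y * h ^ 4 / 12"
    by (rule central_difference_bound[where diff = "\<lambda>m r. (partial_y ^^ m) u (x, r, s)"])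
       (use smooth_fun_has_funpow_partial_y[OF u] K4y x y h in auto)
  ultimately have "\<bar>(u (x + h, y, s) + u (x - h, y, s) - 2 * u (x, y, s) - h\<^sup>2 * (partial_x ^^ 2) u (x, y, s))
      + (u (x, y + h, s) + u (x, y - h, s) - 2 * u (x, y, s) - h\<^sup>2 * (partial_y ^^ 2) u (x, y, s))\<bar>
      \<le> K4x * h ^ 4 / 12 + K4y * h ^ 4 / 12"
    by (meson abs_triangle_ineq add_mono order_trans)
  then have "\<bar>(u (x + h, y, s) + u (x - h, y, s) - 2 * u (x, y, s) - h\<^sup>2 * (partial_x ^^ 2) u (x, y, s))
      + (u (x, y + h, s) + u (x, y - h, s) - 2 * u (x, y, s) - h\<^sup>2 * (partial_y ^^ 2) u (x, y, s))\<bar> / h\<^sup>2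
      \<le> (K4x + K4y) * h\<^sup>2 / 12"
    using h by (simp add: divide_le_eq power4_eq_xxxx power2_eq_square algebra_simps)
  moreover have "lap_h h M (\<lambda>i j. u (real i * h, real j * h, s)) i j
      - ((partial_x ^^ 2) u (x, y, s) + (partial_y ^^ 2) u (x, y, s))
      = ((u (x + h, y, s) + u (x - h, y, s) - 2 * u (x, y, s) - h\<^sup>2 * (partial_x ^^ 2) u (x, y, s))
      + (u (x, y + h, s) + u (x, y - h, s) - 2 * u (x, y, s) - h\<^sup>2 * (partial_y ^^ 2) u (x, y, s))) / h\<^sup>2"
    unfolding lap_h_periodic_sample[OF per_x per_y M ij, folded h_def] x_def y_def
    using h by (simp add: field_simps)
  ultimately show ?thesis by (simp add: x_def y_def abs_divide)
qed

text \<open>The first step is only first-order accurate; the restriction \<open>\<tau>\<^sub>1 \<le> h\<^sup>2 / (4\<epsilon>\<^sup>2)\<close>, a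
  consequence of the step-size condition, keeps its truncation error of order \<open>h\<^sup>2\<close>.\<close>
lemma allen_cahn_grid_truncation_bound:
  fixes u :: "real \<times> real \<times> real \<Rightarrow> real" and t :: "nat \<Rightarrow> real"
  assumes L: "0 < L" and u: "smooth_fun u"
    and per_x: "\<And>x y s. u (x + L, y, s) = u (x, y, s)"
    and per_y: "\<And>x y s. u (x, y + L, s) = u (x, y, s)"
    and pde: "\<And>x y s. 0 < s \<Longrightarrow> s \<le> T \<Longrightarrow>
               dt u x y s = \<epsilon>\<^sup>2 * (dxx u x y s + dyy u x y s) - fAC (u (x, y, s))"
    and K2: "\<And>p. p \<in> {0..2 * L} \<times> {0..2 * L} \<times> {0..T} \<Longrightarrow> \<bar>(partial_t ^^ 2) u p\<bar> \<le> K2"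
    and K3: "\<And>p. p \<in> {0..2 * L} \<times> {0..2 * L} \<times> {0..T} \<Longrightarrow> \<bar>(partial_t ^^ 3) u p\<bar> \<le> K3"
    and K4x: "\<And>p. p \<in> {0..2 * L} \<times> {0..2 * L} \<times> {0..T} \<Longrightarrow> \<bar>(partial_x ^^ 4) u p\<bar> \<le> K4x"
    and K4y: "\<And>p. p \<in> {0..2 * L} \<times> {0..2 * L} \<times> {0..T} \<Longrightarrow> \<bar>(partial_y ^^ 4) u p\<bar> \<le> K4y"
    and M: "1 \<le> M" and t0: "t 0 = 0" and tN: "t N = T" and inc: "\<forall>k\<in>{1..N}. t (k - 1) < t k"
    and ratio: "\<And>k. k \<in> {2..N} \<Longrightarrow> ratio t k \<le> 3"
    and first: "tau t 1 \<le> (L / real M)\<^sup>2 / (4 * \<epsilon>\<^sup>2)"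
    and n: "n \<in> {1..N}" and ij: "i \<in> {1..M}" "j \<in> {1..M}"
  defines "h \<equiv> L / real M"
  shows "\<bar>D2 t (grid_sample h u t) n i j - \<epsilon>\<^sup>2 * lap_h h M (grid_sample h u t n) i j + fAC (grid_sample h u t n i j)\<bar>
    \<le> (K2 * h\<^sup>2 / (8 * \<epsilon>\<^sup>2) + 4 * K3 * (tau_max t N)\<^sup>2) + \<epsilon>\<^sup>2 * ((K4x + K4y) * h\<^sup>2 / 12)"
proof -
  define x y where "x = real i * h" and "y = real j * h"
  have xy: "x \<in> {0..2 * L}" "y \<in> {0..2 * L}"
    using ij M L mult_right_mono[of "real i" "real M" h] mult_right_mono[of "real j" "real M" h]
    by (auto simp: x_def y_def h_def)
  have s: "0 < t n" "t n \<le> T"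
    using mesh_mono[OF inc, of 1 n] mesh_mono[OF inc, of n N] bspec[OF inc, of 1] n t0 tN by auto
  have "\<bar>D2 t (\<lambda>n i j. u (x, y, t n)) n i j - (partial_t ^^ 1) u (x, y, t n)\<bar>
      \<le> K2 * tau t 1 / 2 + 4 * K3 * (tau_max t N)\<^sup>2"
    by (rule D2_sample_truncation_bound[where diff = "\<lambda>m r. (partial_t ^^ m) u (x, y, r)", OF _ _ _ _ t0 inc ratio n])
       (use smooth_fun_has_funpow_partial_t[OF u] K2 K3 xy tN in auto)
  moreover have "K2 * tau t 1 / 2 \<le> K2 * h\<^sup>2 / (8 * \<epsilon>\<^sup>2)"
    using mult_left_mono[OF first, of K2] K2[of "(0, 0, 0)"] L s by (simp add: h_def)
  ultimately have time: "\<bar>D2 t (grid_sample h u t) n i j - partial_t u (x, y, t n)\<bar>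
      \<le> K2 * h\<^sup>2 / (8 * \<epsilon>\<^sup>2) + 4 * K3 * (tau_max t N)\<^sup>2"
    by (simp add: D2_def grid_sample_def x_def y_def)
  have "\<bar>lap_h h M (grid_sample h u t n) i j - ((partial_x ^^ 2) u (x, y, t n) + (partial_y ^^ 2) u (x, y, t n))\<bar>
      \<le> (K4x + K4y) * h\<^sup>2 / 12"
    unfolding grid_sample_def x_def y_def h_def
    by (rule lap_h_truncation_bound[OF L M u per_x per_y _ _ ij]) (use K4x K4y s in auto)
  then have "\<epsilon>\<^sup>2 * \<bar>lap_h h M (grid_sample h u t n) i j - (dxx u x y (t n) + dyy u x y (t n))\<bar>
      \<le> \<epsilon>\<^sup>2 * ((K4x + K4y) * h\<^sup>2 / 12)"
    by (intro mult_left_mono) (simp_all add: smooth_fun_dxx[OF u] smooth_fun_dyy[OF u] numeral_2_eq_2)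
  then have space: "\<bar>\<epsilon>\<^sup>2 * lap_h h M (grid_sample h u t n) i j - \<epsilon>\<^sup>2 * (dxx u x y (t n) + dyy u x y (t n))\<bar>
      \<le> \<epsilon>\<^sup>2 * ((K4x + K4y) * h\<^sup>2 / 12)"
    by (simp add: abs_mult flip: right_diff_distrib)
  have "D2 t (grid_sample h u t) n i j - \<epsilon>\<^sup>2 * lap_h h M (grid_sample h u t n) i j + fAC (grid_sample h u t n i j)
      = (D2 t (grid_sample h u t) n i j - partial_t u (x, y, t n))
        - (\<epsilon>\<^sup>2 * lap_h h M (grid_sample h u t n) i j - \<epsilon>\<^sup>2 * (dxx u x y (t n) + dyy u x y (t n)))"
    using pde[OF s, of x y] by (simp add: smooth_fun_dt[OF u] grid_sample_def x_def y_def)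
  then have "\<bar>D2 t (grid_sample h u t) n i j - \<epsilon>\<^sup>2 * lap_h h M (grid_sample h u t n) i j + fAC (grid_sample h u t n i j)\<bar>
      \<le> \<bar>D2 t (grid_sample h u t) n i j - partial_t u (x, y, t n)\<bar>
        + \<bar>\<epsilon>\<^sup>2 * lap_h h M (grid_sample h u t n) i j - \<epsilon>\<^sup>2 * (dxx u x y (t n) + dyy u x y (t n))\<bar>"
    by (simp only: abs_triangle_ineq4)
  with time space show ?thesis by linarith
qed

lemma allen_cahn_truncation_error:
  fixes u :: "real \<times> real \<times> real \<Rightarrow> real" and L \<epsilon> T :: real
  assumes L: "0 < L" and \<epsilon>: "0 < \<epsilon>" and T: "0 \<le> T" and u: "smooth_fun u"
    and per_x: "\<And>x y s. u (x + L, y, s) = u (x, y, s)"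
    and per_y: "\<And>x y s. u (x, y + L, s) = u (x, y, s)"
    and pde: "\<And>x y s. 0 < s \<Longrightarrow> s \<le> T \<Longrightarrow>
               dt u x y s = \<epsilon>\<^sup>2 * (dxx u x y s + dyy u x y s) - fAC (u (x, y, s))"
  obtains K where "0 \<le> K"
    and "\<And>M N t n i j. 1 \<le> M \<Longrightarrow> t 0 = 0 \<Longrightarrow> t N = T \<Longrightarrow> \<forall>k\<in>{1..N}. t (k - 1) < t k \<Longrightarrow>
          (\<And>k. k \<in> {2..N} \<Longrightarrow> ratio t k \<le> 3) \<Longrightarrow> tau t 1 \<le> (L / real M)\<^sup>2 / (4 * \<epsilon>\<^sup>2) \<Longrightarrow>
          n \<in> {1..N} \<Longrightarrow> i \<in> {1..M} \<Longrightarrow> j \<in> {1..M} \<Longrightarrow>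
          \<bar>D2 t (grid_sample (L / real M) u t) n i j
            - \<epsilon>\<^sup>2 * lap_h (L / real M) M (grid_sample (L / real M) u t n) i j
            + fAC (grid_sample (L / real M) u t n i j)\<bar>
          \<le> K * ((tau_max t N)\<^sup>2 + (L / real M)\<^sup>2)"
proof -
  define B where "B = {0..2 * L} \<times> {0..2 * L} \<times> {0..T}"
  have "compact B" unfolding B_def by (intro compact_Times compact_Icc)
  have bounded: "\<exists>K. \<forall>p\<in>B. \<bar>(dir_deriv v ^^ m) u p\<bar> \<le> K" for v m
    using continuous_on_compact_bound[OF \<open>compact B\<close>
        continuous_on_subset[OF smooth_fun_continuous_on[OF smooth_fun_funpow_dir_deriv[OF u]]]]
    by (metis real_norm_def subset_UNIV)
  obtain K2 K3 K4x K4y where K2: "\<forall>p\<in>B. \<bar>(partial_t ^^ 2) u p\<bar> \<le> K2"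
    and K3: "\<forall>p\<in>B. \<bar>(partial_t ^^ 3) u p\<bar> \<le> K3"
    and K4x: "\<forall>p\<in>B. \<bar>(partial_x ^^ 4) u p\<bar> \<le> K4x" and K4y: "\<forall>p\<in>B. \<bar>(partial_y ^^ 4) u p\<bar> \<le> K4y"
    using bounded by metis
  have "(0, 0, 0) \<in> B" using L T by (simp add: B_def)
  then have K_nonneg: "0 \<le> K2" "0 \<le> K3" "0 \<le> K4x + K4y" using K2 K3 K4x K4y by force+
  define K where "K = 4 * K3 + K2 / (8 * \<epsilon>\<^sup>2) + \<epsilon>\<^sup>2 * (K4x + K4y) / 12"
  show ?thesis
  proof (rule that)
    show "0 \<le> K" using K_nonneg by (simp add: K_def)
    fix M N n i j and t :: "nat \<Rightarrow> real"
    let ?h = "L / real M" and ?S = "(tau_max t N)\<^sup>2 + (L / real M)\<^sup>2"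
    assume "1 \<le> M" "t 0 = 0" "t N = T" "\<forall>k\<in>{1..N}. t (k - 1) < t k" "\<And>k. k \<in> {2..N} \<Longrightarrow> ratio t k \<le> 3"
      "tau t 1 \<le> ?h\<^sup>2 / (4 * \<epsilon>\<^sup>2)" "n \<in> {1..N}" "i \<in> {1..M}" "j \<in> {1..M}"
    from allen_cahn_grid_truncation_bound[OF L u per_x per_y pde _ _ _ _ this, of K2 K3 K4x K4y]
    have "\<bar>D2 t (grid_sample ?h u t) n i j - \<epsilon>\<^sup>2 * lap_h ?h M (grid_sample ?h u t n) i j + fAC (grid_sample ?h u t n i j)\<bar>
      \<le> K2 / (8 * \<epsilon>\<^sup>2) * ?h\<^sup>2 + 4 * K3 * (tau_max t N)\<^sup>2 + \<epsilon>\<^sup>2 * (K4x + K4y) / 12 * ?h\<^sup>2"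
      using K2 K3 K4x K4y unfolding B_def by simp
    also have "\<dots> \<le> K2 / (8 * \<epsilon>\<^sup>2) * ?S + 4 * K3 * ?S + \<epsilon>\<^sup>2 * (K4x + K4y) / 12 * ?S"
      using K_nonneg by (intro add_mono mult_left_mono) auto
    also have "\<dots> = K * ?S" by (simp add: K_def distrib_right)
    finally show "\<bar>D2 t (grid_sample ?h u t) n i j - \<epsilon>\<^sup>2 * lap_h ?h M (grid_sample ?h u t n) i j
        + fAC (grid_sample ?h u t n i j)\<bar> \<le> K * ?S" .
  qed
qed

lemma bdf2_allen_cahn_convergence:
  fixes U V :: "nat \<Rightarrow> nat \<Rightarrow> nat \<Rightarrow> real" and t :: "nat \<Rightarrow> real" and M N :: nat
  assumes M: "1 \<le> M" and h: "0 < h" and \<eta>: "1 / 2 \<le> \<eta>" "\<eta> < 1"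
    and t0: "t 0 = 0" and inc: "\<forall>k\<in>{1..N}. t (k - 1) < t k"
    and ratio: "\<And>n. n \<in> {1..N} \<Longrightarrow> 0 \<le> ratio t n"
    and step: "\<And>n. n \<in> {1..N} \<Longrightarrow> tau t n \<le> ((1 + 2 * ratio t n) * \<eta> - (ratio t n)\<^sup>2) / (\<eta>\<^sup>2 * (1 + ratio t n))
                                  * ((1 - \<eta>) / (2 + 4 * \<epsilon>\<^sup>2 / h\<^sup>2))"
    and scheme: "\<And>n i j. n \<in> {1..N} \<Longrightarrow> i \<in> {1..M} \<Longrightarrow> j \<in> {1..M} \<Longrightarrow>
            D2 t U n i j = \<epsilon>\<^sup>2 * lap_h h M (U n) i j - fAC (U n i j)"
    and init: "\<And>i j. U 0 i j = V 0 i j"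
    and V_bounded: "\<And>n i j. n \<le> N \<Longrightarrow> i \<in> {1..M} \<Longrightarrow> j \<in> {1..M} \<Longrightarrow> \<bar>V n i j\<bar> \<le> 1"
    and consistent: "\<And>n i j. n \<in> {1..N} \<Longrightarrow> i \<in> {1..M} \<Longrightarrow> j \<in> {1..M} \<Longrightarrow>
            \<bar>D2 t V n i j - \<epsilon>\<^sup>2 * lap_h h M (V n) i j + fAC (V n i j)\<bar> \<le> \<rho>"
    and \<rho>: "0 \<le> \<rho>" and n: "n \<le> N"
  shows "grid_maxnorm M (\<lambda>i j. V n i j - U n i j) \<le> 2 * \<rho> * t n * exp (2 * t n / (1 - \<eta>)) / (1 - \<eta>)"
proof -
  have \<eta>0: "0 < \<eta>" using \<eta> by simp
  have "2 \<le> 2 + 4 * \<epsilon>\<^sup>2 / h\<^sup>2" by simp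
  note coeffs = bdf2_step_restriction_imp_stable[OF tau_pos[OF inc] ratio \<eta> this step,
      folded bdf2_a_def bdf2_b_def]
  have U_scheme: "bdf2_a t n * (U n i j - U (n - 1) i j) - bdf2_b t n * (U (n - 1) i j - U (n - 2) i j)
      = \<epsilon>\<^sup>2 * lap_h h M (U n) i j - fAC (U n i j)" if "n \<in> {1..N}" "i \<in> {1..M}" "j \<in> {1..M}" for n i j
    using scheme[OF that] D2_eq_bdf2_coeffs[of n t U i j] that by simp
  have U_bounded: "\<bar>U n i j\<bar> \<le> 1" if "n \<le> N" "i \<in> {1..M}" "j \<in> {1..M}" for n i j
    by (rule bdf2_max_principle[OF M h \<eta>0 \<eta>(2) coeffs(1) _ U_scheme that])
       (use V_bounded[of 0] init in auto)
  define e where "e n = (\<lambda>i j. V n i j - U n i j)" for n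
  define q where "q n i j = (V n i j)\<^sup>2 + V n i j * U n i j + (U n i j)\<^sup>2" for n i j
  define R where "R n i j = D2 t V n i j - \<epsilon>\<^sup>2 * lap_h h M (V n) i j + fAC (V n i j)" for n i j
  have "grid_maxnorm M (e n) \<le> 2 * \<rho> * t n * exp (2 * t n / (1 - \<eta>)) / (1 - \<eta>)"
  proof (rule bdf2_error_bound[where e = e and q = q and R = R, OF M h \<eta>0 \<eta>(2) coeffs(1,3) t0 inc _ _ _ \<rho> _ n])
    show "e 0 i j = 0" for i j by (simp add: e_def init)
    show "0 \<le> q n i j \<and> q n i j \<le> 3" if "n \<in> {1..N}" "i \<in> {1..M}" "j \<in> {1..M}" for n i j
      using fAC_diff_factor_bounds[OF V_bounded U_bounded] that by (simp add: q_def)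
    show "grid_maxnorm M (R n) \<le> \<rho>" if "n \<in> {1..N}" for n
      using consistent that by (intro grid_maxnorm_le[OF M]) (simp add: R_def)
    show "bdf2_a t n * (e n i j - e (n - 1) i j) - bdf2_b t n * (e (n - 1) i j - e (n - 2) i j)
        = \<epsilon>\<^sup>2 * lap_h h M (e n) i j - (q n i j - 1) * e n i j + R n i j"
      if "n \<in> {1..N}" "i \<in> {1..M}" "j \<in> {1..M}" for n i j
      using U_scheme[OF that] D2_eq_bdf2_coeffs[of n t V i j] that fAC_diff[of "V n i j" "U n i j"]
      by (simp add: e_def q_def R_def lap_h_diff algebra_simps)
  qed
  then show ?thesis by (simp add: e_def)
qed

lemma allen_cahn_bdf2_error_estimate:
  fixes u :: "real \<times> real \<times> real \<Rightarrow> real" and U :: "nat \<Rightarrow> nat \<Rightarrow> nat \<Rightarrow> real"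
    and t :: "nat \<Rightarrow> real" and M N :: nat and rs :: real
  assumes L: "0 < L" and \<epsilon>: "0 < \<epsilon>"
    and u_bounded: "\<And>x y s. 0 \<le> s \<Longrightarrow> s \<le> T \<Longrightarrow> \<bar>u (x, y, s)\<bar> \<le> 1"
    and K: "0 \<le> K"
    and truncation: "\<And>M N t n i j. 1 \<le> M \<Longrightarrow> t 0 = 0 \<Longrightarrow> t N = T \<Longrightarrow> \<forall>k\<in>{1..N}. t (k - 1) < t k \<Longrightarrow>
          (\<And>k. k \<in> {2..N} \<Longrightarrow> ratio t k \<le> 3) \<Longrightarrow> tau t 1 \<le> (L / real M)\<^sup>2 / (4 * \<epsilon>\<^sup>2) \<Longrightarrow>
          n \<in> {1..N} \<Longrightarrow> i \<in> {1..M} \<Longrightarrow> j \<in> {1..M} \<Longrightarrow>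
          \<bar>D2 t (grid_sample (L / real M) u t) n i j
            - \<epsilon>\<^sup>2 * lap_h (L / real M) M (grid_sample (L / real M) u t n) i j
            + fAC (grid_sample (L / real M) u t n i j)\<bar>
          \<le> K * ((tau_max t N)\<^sup>2 + (L / real M)\<^sup>2)"
  defines "h \<equiv> L / real M" and "\<eta> \<equiv> 2 * rs\<^sup>2 / (1 + rs)\<^sup>2"
  assumes M: "1 \<le> M" and t0: "t 0 = 0" and tN: "t N = T" and inc: "\<forall>k\<in>{1..N}. t (k - 1) < t k"
    and rs: "1 \<le> rs" "rs < 1 + sqrt 2"
    and ratio: "\<forall>k\<in>{2..N}. 0 < ratio t k \<and> ratio t k \<le> rs"
    and step: "\<forall>n\<in>{1..N}. tau t n \<le> ((1 + 2 * ratio t n) * \<eta> - (ratio t n)\<^sup>2) / (\<eta>\<^sup>2 * (1 + ratio t n))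
                                  * ((1 - \<eta>) / (2 + 4 * \<epsilon>\<^sup>2 / h\<^sup>2))"
    and init: "\<forall>i j. U 0 i j = u (real i * h, real j * h, 0)"
    and scheme: "\<forall>n\<in>{1..N}. \<forall>i\<in>{1..M}. \<forall>j\<in>{1..M}.
            D2 t U n i j = \<epsilon>\<^sup>2 * lap_h h M (U n) i j - fAC (U n i j)"
    and n: "n \<in> {1..N}"
  shows "grid_maxnorm M (\<lambda>i j. u (real i * h, real j * h, t n) - U n i j)
           \<le> 2 * K * t n / (1 - \<eta>) * exp (4 * t n / (1 - \<eta>)) * ((tau_max t N)\<^sup>2 + h\<^sup>2)"
proof -
  have h: "0 < h" using L M by (simp add: h_def)
  have \<eta>: "1 / 2 \<le> \<eta>" "\<eta> < 1" using bdf2_eta_bounds[OF rs] by (simp_all add: \<eta>_def)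
  have ratio_nonneg: "0 \<le> ratio t k" if "k \<in> {1..N}" for k
    using ratio that by (cases "k = 1") (auto simp: ratio_def intro: less_imp_le)
  have ratio_le_3: "ratio t k \<le> 3" if "k \<in> {2..N}" for k
    using ratio that rs(2) sqrt2_less_2 by force
  have "1 \<in> {1..N}" using n by simp
  have "2 + 4 * \<epsilon>\<^sup>2 / h\<^sup>2 \<le> bdf2_a t 1"
    using bdf2_step_restriction_imp_stable(2)[OF tau_pos[OF inc \<open>1 \<in> {1..N}\<close>] ratio_nonneg \<eta> _ step[rule_format]]
      \<open>1 \<in> {1..N}\<close> by (simp add: bdf2_a_def)
  then have "(2 + 4 * \<epsilon>\<^sup>2 / h\<^sup>2) * tau t 1 \<le> 1"
    using tau_pos[OF inc \<open>1 \<in> {1..N}\<close>] by (simp add: bdf2_a_def ratio_def le_divide_eq)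
  then have "4 * \<epsilon>\<^sup>2 / h\<^sup>2 * tau t 1 \<le> 1"
    using tau_pos[OF inc \<open>1 \<in> {1..N}\<close>] unfolding distrib_right by linarith
  then have first_step: "tau t 1 \<le> h\<^sup>2 / (4 * \<epsilon>\<^sup>2)" using h \<epsilon> by (simp add: field_simps)
  have t_range: "0 \<le> t k" "t k \<le> T" if "k \<le> N" for k
    using mesh_mono[OF inc, of 0 k] mesh_mono[OF inc, of k N] that t0 tN by auto
  have "grid_maxnorm M (\<lambda>i j. grid_sample h u t n i j - U n i j)
      \<le> 2 * (K * ((tau_max t N)\<^sup>2 + h\<^sup>2)) * t n * exp (2 * t n / (1 - \<eta>)) / (1 - \<eta>)"
  proof (rule bdf2_allen_cahn_convergence[OF M h \<eta> t0 inc ratio_nonneg])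
    show "\<bar>grid_sample h u t k i j\<bar> \<le> 1" if "k \<le> N" for k i j
      using u_bounded t_range[OF that] by (simp add: grid_sample_def)
    show "\<bar>D2 t (grid_sample h u t) k i j - \<epsilon>\<^sup>2 * lap_h h M (grid_sample h u t k) i j + fAC (grid_sample h u t k i j)\<bar>
        \<le> K * ((tau_max t N)\<^sup>2 + h\<^sup>2)" if "k \<in> {1..N}" "i \<in> {1..M}" "j \<in> {1..M}" for k i j
      using truncation[OF M t0 tN inc ratio_le_3 first_step[unfolded h_def] that] by (simp add: h_def)
  qed (use step scheme init K n t0 in \<open>auto simp: grid_sample_def\<close>)
  also have "\<dots> = 2 * K * t n / (1 - \<eta>) * ((tau_max t N)\<^sup>2 + h\<^sup>2) * exp (2 * t n / (1 - \<eta>))"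
    by (simp add: algebra_simps add_divide_distrib)
  also have "\<dots> \<le> 2 * K * t n / (1 - \<eta>) * ((tau_max t N)\<^sup>2 + h\<^sup>2) * exp (4 * t n / (1 - \<eta>))"
  proof -
    have "2 * t n / (1 - \<eta>) \<le> 4 * t n / (1 - \<eta>)"
      using t_range[of n] n \<eta> by (intro divide_right_mono) auto
    then show ?thesis using K t_range[of n] n \<eta> by (intro mult_left_mono) auto
  qed
  also have "\<dots> = 2 * K * t n / (1 - \<eta>) * exp (4 * t n / (1 - \<eta>)) * ((tau_max t N)\<^sup>2 + h\<^sup>2)"
    by simp
  finally show ?thesis by (simp add: grid_sample_def)
qed

theorem theorem5p1:
  fixes L \<epsilon> T :: real and u :: "real \<times> real \<times> real \<Rightarrow> real"
  assumes "L > 0" and "\<epsilon> > 0" and "T > 0"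
    and smooth: "smooth_fun u"
    and per_x: "\<And>x y s. u (x + L, y, s) = u (x, y, s)"
    and per_y: "\<And>x y s. u (x, y + L, s) = u (x, y, s)"
    and pde: "\<And>x y s. 0 < s \<Longrightarrow> s \<le> T \<Longrightarrow>
               dt u x y s = \<epsilon>\<^sup>2 * (dxx u x y s + dyy u x y s) - fAC (u (x, y, s))"
    and init: "\<And>x y. \<bar>u (x, y, 0)\<bar> \<le> 1"
  shows "\<exists>C. \<forall>(M::nat) (N::nat) (t::nat \<Rightarrow> real) (rs::real) (U::nat \<Rightarrow> nat \<Rightarrow> nat \<Rightarrow> real).
     let h = L / real M; \<eta> = 2 * rs\<^sup>2 / (1 + rs)\<^sup>2 in
     (M \<ge> 1 \<and> t 0 = 0 \<and> t N = T \<and> (\<forall>k\<in>{1..N}. t (k - 1) < t k)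
      \<and> 1 \<le> rs \<and> rs < 1 + sqrt 2
      \<and> (\<forall>k\<in>{2..N}. 0 < ratio t k \<and> ratio t k \<le> rs)
      \<and> (\<forall>n\<in>{1..N}. tau t n \<le> ((1 + 2 * ratio t n) * \<eta> - (ratio t n)\<^sup>2) / (\<eta>\<^sup>2 * (1 + ratio t n))
                                  * ((1 - \<eta>) / (2 + 4 * \<epsilon>\<^sup>2 / h\<^sup>2)))
      \<and> (\<forall>i j. U 0 i j = u (real i * h, real j * h, 0))
      \<and> (\<forall>n\<in>{1..N}. \<forall>i\<in>{1..M}. \<forall>j\<in>{1..M}.
            D2 t U n i j = \<epsilon>\<^sup>2 * lap_h h M (U n) i j - fAC (U n i j)))
     \<longrightarrow> (\<forall>n\<in>{1..N}.
            grid_maxnorm M (\<lambda>i j. u (real i * h, real j * h, t n) - U n i j)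
              \<le> C * t n / (1 - \<eta>) * exp (4 * t n / (1 - \<eta>)) * ((tau_max t N)\<^sup>2 + h\<^sup>2))"
proof -
  have u_bounded: "\<bar>u (x, y, s)\<bar> \<le> 1" if "0 \<le> s" "s \<le> T" for x y s
    using allen_cahn_solution_bounded[OF assms(1) smooth per_x per_y pde init that] .
  obtain K where K: "0 \<le> K"
    and truncation: "\<And>M N t n i j. 1 \<le> M \<Longrightarrow> t 0 = 0 \<Longrightarrow> t N = T \<Longrightarrow> \<forall>k\<in>{1..N}. t (k - 1) < t k \<Longrightarrow>
          (\<And>k. k \<in> {2..N} \<Longrightarrow> ratio t k \<le> 3) \<Longrightarrow> tau t 1 \<le> (L / real M)\<^sup>2 / (4 * \<epsilon>\<^sup>2) \<Longrightarrow>
          n \<in> {1..N} \<Longrightarrow> i \<in> {1..M} \<Longrightarrow> j \<in> {1..M} \<Longrightarrow>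
          \<bar>D2 t (grid_sample (L / real M) u t) n i j
            - \<epsilon>\<^sup>2 * lap_h (L / real M) M (grid_sample (L / real M) u t n) i j
            + fAC (grid_sample (L / real M) u t n i j)\<bar>
          \<le> K * ((tau_max t N)\<^sup>2 + (L / real M)\<^sup>2)"
    using allen_cahn_truncation_error[OF assms(1,2) less_imp_le[OF assms(3)] smooth per_x per_y pde] by blast
  show ?thesis
    unfolding Let_def
    by (intro exI[of _ "2 * K"] allI impI ballI, elim conjE)
       (rule allen_cahn_bdf2_error_estimate[OF assms(1,2) u_bounded K truncation], assumption+)
qed

end
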